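(* Let $\Omega\subset\mathbb{R}^n$ be a bounded domain with the uniform $C^1$-regularity property, $f\in L^3(\Omega)$, $S_b\in W^{1/3,3/2}(\partial\Omega)$, $\alpha,\beta\in L^\infty(\Omega)$ with $0<\underline{\alpha}\le\alpha\le\overline{\alpha}<\infty$, $0<\underline{\beta}\le\beta\le\overline{\beta}<\infty$ a.e., $V=W^3(\mathrm{div};\Omega)$, $Q=L^{3/2}(\Omega)$. For $\varepsilon>0$ let $(\mathbf{m}_\varepsilon,S_\varepsilon)\in V\times Q$ be the unique solution of $$\int_\Omega(\alpha+\beta|\mathbf{m}_\varepsilon|)(\mathbf{m}_\varepsilon\cdot\mathbf{v})\,d\mathbf{x}+\varepsilon\int_\Omega|\mathrm{div}\,\mathbf{m}_\varepsilon|\,\mathrm{div}\,\mathbf{m}_\varepsilon\,\mathrm{div}\,\mathbf{v}\,d\mathbf{x}-\int_\Omega\mathrm{div}(\mathbf{v})\,S_\varepsilon\,d\mathbf{x}=-\int_{\partial\Omega}S_b(\mathbf{v}\cdot\mathbf{n})\,d\sigma\quad\forall\mathbf{v}\in V,$$ $$\varepsilon\int_\Omega\frac{S_\varepsilon}{\sqrt{|S_\varepsilon|}}\,q\,d\mathbf{x}+\int_\Omega\mathrm{div}(\mathbf{m}_\varepsilon)\,q\,d\mathbf{x}=\int_\Omega f\,q\,d\mathbf{x}\quad\forall q\in Q.$$ Then there exist constants $\mathcal{K}_{\mathbf{m}},\mathcal{K}_S$, independent of $\varepsilon$, such that for all sufficiently small $\varepsilon>0$: $\|\mathbf{m}_\varepsilon\|_V\le\mathcal{K}_{\mathbf{m}}$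 and $\|S_\varepsilon\|_Q\le\mathcal{K}_S$.
   Context: $W^3(\mathrm{div};\Omega):=\{\mathbf{v}\in(L^3(\Omega))^n:\mathrm{div}(\mathbf{v})\in L^3(\Omega)\}$ with norm $\|\mathbf{v}\|_V=(\|\mathbf{v}\|_{L^3}^3+\|\mathrm{div}\,\mathbf{v}\|_{L^3}^3)^{1/3}$; $\|\cdot\|_Q$ is the $L^{3/2}$ norm. The normal trace $\mathbf{v}\cdot\mathbf{n}$ lies in $(W^{1/3,3/2}(\partial\Omega))'$ and the boundary integral denotes the duality pairing. $p/\sqrt{|p|}:=0$ where $p=0$. *)

theory Defs
  imports "HOL-Analysis.Analysis"
begin

definition Lp :: "real \<Rightarrow> (real^'n) set \<Rightarrow> (real^'n \<Rightarrow> 'b::real_normed_vector) \<Rightarrow> bool" where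
  "Lp p \<Omega> f \<longleftrightarrow> f \<in> borel_measurable (lebesgue_on \<Omega>) \<and>
     integrable (lebesgue_on \<Omega>) (\<lambda>x. norm (f x) powr p)"

definition Lp_norm :: "real \<Rightarrow> (real^'n) set \<Rightarrow> (real^'n \<Rightarrow> 'b::real_normed_vector) \<Rightarrow> real" where
  "Lp_norm p \<Omega> f = (integral\<^sup>L (lebesgue_on \<Omega>) (\<lambda>x. norm (f x) powr p)) powr (1 / p)"

text \<open>Norm of W^3(div): (||v||_3^3 + ||div v||_3^3)^(1/3), with dv the weak divergence of v.\<close>
definition V_norm :: "(real^'n) set \<Rightarrow> (real^'n \<Rightarrow> real^'n) \<Rightarrow> (real^'n \<Rightarrow> real) \<Rightarrow> real" where
  "V_norm \<Omega> v dv = (integral\<^sup>L (lebesgue_on \<Omega>) (\<lambda>x. norm (v x) powr 3)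
                    + integral\<^sup>L (lebesgue_on \<Omega>) (\<lambda>x. \<bar>dv x\<bar> powr 3)) powr (1/3)"

definition test_fun :: "(real^'n) set \<Rightarrow> (real^'n \<Rightarrow> real) \<Rightarrow> (real^'n \<Rightarrow> real^'n) \<Rightarrow> bool" where
  "test_fun \<Omega> \<phi> g \<longleftrightarrow> (\<forall>x. (\<phi> has_derivative (\<lambda>h. g x \<bullet> h)) (at x)) \<and> continuous_on UNIV g \<and>
     compact (closure {x. \<phi> x \<noteq> 0}) \<and> closure {x. \<phi> x \<noteq> 0} \<subseteq> \<Omega>"

definition weak_div :: "(real^'n) set \<Rightarrow> (real^'n \<Rightarrow> real^'n) \<Rightarrow> (real^'n \<Rightarrow> real) \<Rightarrow> bool" where
  "weak_div \<Omega> v d \<longleftrightarrow> (\<forall>\<phi> g. test_fun \<Omega> \<phi> g \<longrightarrow>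
     integral\<^sup>L (lebesgue_on \<Omega>) (\<lambda>x. v x \<bullet> g x) = - integral\<^sup>L (lebesgue_on \<Omega>) (\<lambda>x. d x * \<phi> x))"

definition weak_grad :: "(real^'n) set \<Rightarrow> (real^'n \<Rightarrow> real) \<Rightarrow> (real^'n \<Rightarrow> real^'n) \<Rightarrow> bool" where
  "weak_grad \<Omega> u G \<longleftrightarrow> (\<forall>\<phi> g. test_fun \<Omega> \<phi> g \<longrightarrow> (\<forall>k.
     integral\<^sup>L (lebesgue_on \<Omega>) (\<lambda>x. u x * g x $ k) = - integral\<^sup>L (lebesgue_on \<Omega>) (\<lambda>x. G x $ k * \<phi> x)))"

text \<open>Duality pairing  int_{bdry Omega} S_b (v.n) d sigma, where S_b is the trace of
  Sext in W^{1,3/2}(Omega) with weak gradient gSext (Green's formula).\<close>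
definition bdry_pair :: "(real^'n) set \<Rightarrow> (real^'n \<Rightarrow> real) \<Rightarrow> (real^'n \<Rightarrow> real^'n)
     \<Rightarrow> (real^'n \<Rightarrow> real^'n) \<Rightarrow> (real^'n \<Rightarrow> real) \<Rightarrow> real" where
  "bdry_pair \<Omega> Sext gSext v dv =
     integral\<^sup>L (lebesgue_on \<Omega>) (\<lambda>x. v x \<bullet> gSext x + dv x * Sext x)"

definition sgn_sqrt :: "real \<Rightarrow> real" where
  "sgn_sqrt p = (if p = 0 then 0 else p / sqrt \<bar>p\<bar>)"

text \<open>Uniform C^1-regularity property (Adams, Sobolev Spaces, 4.10) with m = 1.\<close>
definition unif_C1 :: "(real^'n) set \<Rightarrow> bool" where
  "unif_C1 \<Omega> \<longleftrightarrow> (\<exists>(J::nat set) (U::nat \<Rightarrow> (real^'n) set) (\<Phi>::nat \<Rightarrow> real^'n \<Rightarrow> real^'n)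
       (\<Psi>::nat \<Rightarrow> real^'n \<Rightarrow> real^'n) D\<Phi> D\<Psi> (k0::'n) (\<delta>::real) (M::real) (R::nat).
     (\<forall>j\<in>J. open (U j)) \<and> frontier \<Omega> \<subseteq> (\<Union>j\<in>J. U j) \<and>
     (\<forall>x. \<exists>N. open N \<and> x \<in> N \<and> finite {j\<in>J. U j \<inter> N \<noteq> {}}) \<and>
     (\<forall>j\<in>J. \<Phi> j ` U j = ball 0 1 \<and> \<Psi> j ` ball 0 1 = U j \<and>
        (\<forall>x\<in>U j. \<Psi> j (\<Phi> j x) = x) \<and> (\<forall>y\<in>ball 0 1. \<Phi> j (\<Psi> j y) = y)) \<and>
     (\<forall>j\<in>J. (\<forall>x\<in>U j. (\<Phi> j has_derivative D\<Phi> j x) (at x)) \<and>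
        (\<forall>k. continuous_on (U j) (\<lambda>x. D\<Phi> j x (axis k 1))) \<and>
        (\<forall>y\<in>ball 0 1. (\<Psi> j has_derivative D\<Psi> j y) (at y)) \<and>
        (\<forall>k. continuous_on (ball 0 1) (\<lambda>y. D\<Psi> j y (axis k 1)))) \<and>
     0 < \<delta> \<and> {x\<in>\<Omega>. infdist x (frontier \<Omega>) < \<delta>} \<subseteq> (\<Union>j\<in>J. \<Psi> j ` ball 0 (1/2)) \<and>
     (\<forall>j\<in>J. \<Phi> j ` (U j \<inter> \<Omega>) = {y\<in>ball 0 1. 0 < y $ k0}) \<and>
     (\<forall>j\<in>J. \<forall>i. (\<forall>x\<in>U j. \<bar>\<Phi> j x $ i\<bar> \<le> M \<and> (\<forall>k. \<bar>D\<Phi> j x (axis k 1) $ i\<bar> \<le> M)) \<and>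
        (\<forall>y\<in>ball 0 1. \<bar>\<Psi> j y $ i\<bar> \<le> M \<and> (\<forall>k. \<bar>D\<Psi> j y (axis k 1) $ i\<bar> \<le> M))) \<and>
     (\<forall>F\<subseteq>J. card F = R + 1 \<longrightarrow> (\<Inter>j\<in>F. U j) = {}))"

end

theory Submission
  imports Defs
begin

text \<open>Testing the mass equation with \<open>|div m| div m\<close> and the momentum equation with
  \<open>(m, div m)\<close> yields, by Hoelder's inequality with exponents 3 and 3/2,
  \<open>\<parallel>div m\<parallel> \<le> \<parallel>f\<parallel> + \<epsilon> \<parallel>S/\<surd>|S|\<parallel>\<close> and a bound of \<open>\<beta>\<^sub>l\<^sub>o \<parallel>m\<parallel>\<^sup>3\<close> that is linear in
  \<open>\<parallel>S\<parallel>\<^sub>3\<^sub>/\<^sub>2 = \<parallel>S/\<surd>|S|\<parallel>\<^sup>2\<close>, \<open>\<parallel>m\<parallel>\<close> and \<open>\<parallel>div m\<parallel>\<close>. The pressure is controlled by testing the momentum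
  equation with a field \<open>v\<close> whose divergence is \<open>S/\<surd>|S|\<close>: on a domain inside the ball of radius
  \<open>R\<close>, integrating along a coordinate direction gives such a \<open>v\<close> with \<open>\<parallel>v\<parallel>\<^sub>3 \<le> 2R \<parallel>div v\<parallel>\<^sub>3\<close>. This
  bounds \<open>\<parallel>S/\<surd>|S|\<parallel>\<^sup>2\<close> by a quadratic in \<open>\<parallel>m\<parallel>\<close> plus \<open>\<epsilon> \<parallel>div m\<parallel>\<^sup>2\<close>; for \<open>\<epsilon> \<le> 1/2\<close> the
  \<open>\<epsilon>\<close>-terms can be absorbed, and \<open>\<parallel>m\<parallel>\<close> satisfies a cubic inequality with \<open>\<epsilon>\<close>-independent
  coefficients.\<close>

section \<open>Hoelder's inequality and \<open>L\<^sup>p\<close> norms\<close>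

lemma integrable_mult_conjugate_powr:
  fixes u w :: "'a \<Rightarrow> real"
  assumes pq: "p > 1" "q > 1" "1/p + 1/q = 1"
    and [measurable]: "u \<in> borel_measurable M" "w \<in> borel_measurable M"
    and iu: "integrable M (\<lambda>x. \<bar>u x\<bar> powr p)" and iw: "integrable M (\<lambda>x. \<bar>w x\<bar> powr q)"
  shows "integrable M (\<lambda>x. u x * w x)"
proof (rule Bochner_Integration.integrable_bound)
  show "integrable M (\<lambda>x. \<bar>u x\<bar> powr p / p + \<bar>w x\<bar> powr q / q)"
    using iu iw by auto
  show "AE x in M. norm (u x * w x) \<le> norm (\<bar>u x\<bar> powr p / p + \<bar>w x\<bar> powr q / q)"
  proof (rule AE_I2)
    fix x
    have "\<bar>u x\<bar> * \<bar>w x\<bar> \<le> \<bar>u x\<bar> powr p / p + \<bar>w x\<bar> powr q / q"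
      by (rule Youngs_inequality[OF pq]) auto
    then show "norm (u x * w x) \<le> norm (\<bar>u x\<bar> powr p / p + \<bar>w x\<bar> powr q / q)"
      by (simp add: abs_mult)
  qed
qed simp

lemma Holder_inequality:
  fixes u w :: "'a \<Rightarrow> real"
  assumes pq: "p > 1" "q > 1" "1/p + 1/q = 1"
    and "u \<in> borel_measurable M" and "w \<in> borel_measurable M"
    and iu: "integrable M (\<lambda>x. \<bar>u x\<bar> powr p)" and iw: "integrable M (\<lambda>x. \<bar>w x\<bar> powr q)"
  shows "(\<integral>x. \<bar>u x * w x\<bar> \<partial>M)
    \<le> (\<integral>x. \<bar>u x\<bar> powr p \<partial>M) powr (1/p) * (\<integral>x. \<bar>w x\<bar> powr q \<partial>M) powr (1/q)"
proof -
  define A where "A = (\<integral>x. \<bar>u x\<bar> powr p \<partial>M)"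
  define B where "B = (\<integral>x. \<bar>w x\<bar> powr q \<partial>M)"
  have iuw: "integrable M (\<lambda>x. \<bar>u x * w x\<bar>)"
    using integrable_mult_conjugate_powr[OF assms] by auto
  show ?thesis
  proof (cases "A = 0 \<or> B = 0")
    case True
    then have "AE x in M. u x * w x = 0"
    proof
      assume "A = 0"
      then have "AE x in M. \<bar>u x\<bar> powr p = 0"
        unfolding A_def using integral_nonneg_eq_0_iff_AE[OF iu] by auto
      then show ?thesis by eventually_elim auto
    next
      assume "B = 0"
      then have "AE x in M. \<bar>w x\<bar> powr q = 0"
        unfolding B_def using integral_nonneg_eq_0_iff_AE[OF iw] by auto
      then show ?thesis by eventually_elim auto
    qed
    then have "(\<integral>x. \<bar>u x * w x\<bar> \<partial>M) = 0"
      using integral_cong_AE[of "\<lambda>x. \<bar>u x * w x\<bar>" M "\<lambda>_. 0"] borel_measurable_integrable[OF iuw]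
      by (auto elim: eventually_mono)
    then show ?thesis by simp
  next
    case False
    have "A \<ge> 0" "B \<ge> 0"
      unfolding A_def B_def by auto
    with False have AB: "A > 0" "B > 0"
      by auto
    define a where "a = A powr (1/p)"
    define b where "b = B powr (1/q)"
    have ab: "a > 0" "b > 0" "a powr p = A" "b powr q = B"
      using AB pq by (auto simp: a_def b_def powr_powr)
    have pointwise: "\<bar>u x * w x\<bar> \<le> a * b * (\<bar>u x\<bar> powr p / (A * p) + \<bar>w x\<bar> powr q / (B * q))" for x
    proof -
      have "(\<bar>u x\<bar> / a) * (\<bar>w x\<bar> / b) \<le> (\<bar>u x\<bar> / a) powr p / p + (\<bar>w x\<bar> / b) powr q / q"
        using ab by (intro Youngs_inequality[OF pq]) auto
      also have "\<dots> = \<bar>u x\<bar> powr p / (A * p) + \<bar>w x\<bar> powr q / (B * q)"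
        using ab by (simp add: powr_divide)
      finally show ?thesis
        using ab by (simp add: abs_mult field_simps)
    qed
    have "(\<integral>x. \<bar>u x * w x\<bar> \<partial>M)
        \<le> (\<integral>x. a * b * (\<bar>u x\<bar> powr p / (A * p) + \<bar>w x\<bar> powr q / (B * q)) \<partial>M)"
      using iuw iu iw pointwise by (intro integral_mono) auto
    also have "\<dots> = a * b * (A / (A * p) + B / (B * q))"
      using iu iw by (simp add: A_def B_def)
    also have "\<dots> = a * b"
      using AB pq by simp
    finally show ?thesis by (simp add: a_def b_def A_def B_def)
  qed
qed

lemma
  fixes u w :: "real^'n \<Rightarrow> real"
  assumes pq: "p > 1" "q > 1" "1/p + 1/q = 1" and u: "Lp p \<Omega> u" and w: "Lp q \<Omega> w"
  shows integrable_mult_Lp: "integrable (lebesgue_on \<Omega>) (\<lambda>x. u x * w x)"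
    and Holder_Lp: "(\<integral>x. \<bar>u x * w x\<bar> \<partial>lebesgue_on \<Omega>) \<le> Lp_norm p \<Omega> u * Lp_norm q \<Omega> w"
    and Holder_Lp_abs: "\<bar>\<integral>x. u x * w x \<partial>lebesgue_on \<Omega>\<bar> \<le> Lp_norm p \<Omega> u * Lp_norm q \<Omega> w"
proof -
  note prems = pq u[unfolded Lp_def real_norm_def, THEN conjunct1]
    w[unfolded Lp_def real_norm_def, THEN conjunct1]
    u[unfolded Lp_def real_norm_def, THEN conjunct2]
    w[unfolded Lp_def real_norm_def, THEN conjunct2]
  show "integrable (lebesgue_on \<Omega>) (\<lambda>x. u x * w x)"
    by (rule integrable_mult_conjugate_powr[OF prems])
  show H: "(\<integral>x. \<bar>u x * w x\<bar> \<partial>lebesgue_on \<Omega>) \<le> Lp_norm p \<Omega> u * Lp_norm q \<Omega> w"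
    using Holder_inequality[OF prems] by (simp add: Lp_norm_def)
  show "\<bar>\<integral>x. u x * w x \<partial>lebesgue_on \<Omega>\<bar> \<le> Lp_norm p \<Omega> u * Lp_norm q \<Omega> w"
    by (rule order_trans[OF integral_abs_bound H])
qed

lemma
  fixes u w :: "real^'n \<Rightarrow> real"
  assumes "Lp 3 \<Omega> u" and "Lp (3/2) \<Omega> w"
  shows integrable_mult_L3: "integrable (lebesgue_on \<Omega>) (\<lambda>x. u x * w x)"
    and Holder_L3: "(\<integral>x. \<bar>u x * w x\<bar> \<partial>lebesgue_on \<Omega>) \<le> Lp_norm 3 \<Omega> u * Lp_norm (3/2) \<Omega> w"
    and Holder_L3_abs: "\<bar>\<integral>x. u x * w x \<partial>lebesgue_on \<Omega>\<bar> \<le> Lp_norm 3 \<Omega> u * Lp_norm (3/2) \<Omega> w"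
  using integrable_mult_Lp[of 3 "3/2", OF _ _ _ assms] Holder_Lp[of 3 "3/2", OF _ _ _ assms]
    Holder_Lp_abs[of 3 "3/2", OF _ _ _ assms]
  by simp_all

lemma Lp_norm_nonneg: "0 \<le> Lp_norm p \<Omega> u"
  by (simp add: Lp_norm_def)

lemma Lp_norm_powr:
  assumes "p > 0"
  shows "Lp_norm p \<Omega> u powr p = (\<integral>x. norm (u x) powr p \<partial>lebesgue_on \<Omega>)"
  using assms by (simp add: Lp_norm_def powr_powr)

lemma Lp_norm_cube: "Lp_norm 3 \<Omega> u ^ 3 = (\<integral>x. norm (u x) powr 3 \<partial>lebesgue_on \<Omega>)"
  using Lp_norm_powr[of 3 \<Omega> u] Lp_norm_nonneg[of 3 \<Omega> u] by (simp add: powr_realpow)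

lemma Lp_norm_norm_powr:
  assumes "p > 0" "r > 0"
  shows "Lp_norm p \<Omega> (\<lambda>x. norm (u x) powr r) = Lp_norm (p * r) \<Omega> u powr r"
  using assms by (simp add: Lp_norm_def powr_powr mult.commute)

lemma Lp_norm_powr_Lp:
  fixes u :: "real^'n \<Rightarrow> 'b::real_normed_vector"
  assumes "r > 0" and "Lp (p * r) \<Omega> u"
  shows "Lp p \<Omega> (\<lambda>x. norm (u x) powr r)"
proof -
  have [measurable]: "u \<in> borel_measurable (lebesgue_on \<Omega>)"
    using assms by (simp add: Lp_def)
  show ?thesis
    using assms by (simp add: Lp_def powr_powr mult.commute)
qed

lemma Lp_cong_norm:
  assumes "Lp p \<Omega> u" and "w \<in> borel_measurable (lebesgue_on \<Omega>)" and "\<And>x. norm (w x) = norm (u x)"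
  shows "Lp p \<Omega> w"
  using assms by (simp add: Lp_def)

lemma Lp_norm_cong_AE:
  fixes u w :: "real^'n \<Rightarrow> 'b::{real_normed_vector, second_countable_topology}"
  assumes [measurable]: "u \<in> borel_measurable (lebesgue_on \<Omega>)" "w \<in> borel_measurable (lebesgue_on \<Omega>)"
    and "AE x in lebesgue_on \<Omega>. u x = w x"
  shows "Lp_norm p \<Omega> u = Lp_norm p \<Omega> w"
proof -
  have "AE x in lebesgue_on \<Omega>. norm (u x) powr p = norm (w x) powr p"
    using assms(3) by eventually_elim simp
  then have "(\<integral>x. norm (u x) powr p \<partial>lebesgue_on \<Omega>) = (\<integral>x. norm (w x) powr p \<partial>lebesgue_on \<Omega>)"
    by (intro integral_cong_AE) measurable
  then show ?thesis by (simp add: Lp_norm_def)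
qed

lemma Lp_norm_cong_norm:
  assumes "\<And>x. norm (w x) = norm (u x)"
  shows "Lp_norm p \<Omega> w = Lp_norm p \<Omega> u"
  using assms by (simp add: Lp_norm_def)

section \<open>Fubini along a coordinate axis\<close>

text \<open>Splitting off the \<open>k\<close>-th coordinate identifies Lebesgue measure on \<open>\<real>\<^sup>n\<close> with the
  product of \<open>lborel_other_axes k\<close> and Lebesgue measure on the line through \<open>glue_axis k\<close>.\<close>

definition other_axes :: "'n::finite \<Rightarrow> (real^'n) set" where "other_axes k = Basis - {axis k 1}"
definition lborel_other_axes :: "'n::finite \<Rightarrow> (real^'n \<Rightarrow> real) measure" where
  "lborel_other_axes k = (\<Pi>\<^sub>M b\<in>other_axes k. (lborel::real measure))"
definition glue_axis :: "'n::finite \<Rightarrow> (real^'n \<Rightarrow> real) \<times> real \<Rightarrow> real^'n" where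
  "glue_axis k = (\<lambda>(x,t). (\<Sum>b\<in>other_axes k. x b *\<^sub>R b) + t *\<^sub>R axis k 1)"

lemma finite_other_axes[simp]: "finite (other_axes k)" by (simp add: other_axes_def)

lemma sigma_finite_lborel_other_axes: "sigma_finite_measure (lborel_other_axes k)"
proof -
  interpret product_sigma_finite "\<lambda>_. lborel :: real measure" by standard
  show ?thesis unfolding lborel_other_axes_def by (rule sigma_finite) simp
qed

lemma pair_sigma_finite_lborel_other_axes: "pair_sigma_finite (lborel_other_axes k) (lborel::real measure)"
  unfolding pair_sigma_finite_def using sigma_finite_lborel_other_axes
  by (auto intro: lborel.sigma_finite_measure_axioms)

lemma measurable_glue_axis[measurable]: "glue_axis k \<in> borel_measurable (lborel_other_axes k \<Otimes>\<^sub>M lborel)"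
  unfolding glue_axis_def lborel_other_axes_def by measurable

lemma glue_axis_nth: "glue_axis k (x,t) $ k = t"
proof -
  have "(\<Sum>b\<in>other_axes k. x b *\<^sub>R b) $ k = (\<Sum>b\<in>other_axes k. x b * (b $ k))"
    by (simp add: sum_component)
  also have "\<dots> = 0"
    by (rule sum.neutral) (auto simp: other_axes_def Basis_vec_def axis_def split: if_splits)
  finally show ?thesis by (simp add: glue_axis_def axis_def)
qed

lemma glue_axis_shift: "glue_axis k (x,t) + s *\<^sub>R axis k 1 = glue_axis k (x, t + s)"
  by (simp add: glue_axis_def algebra_simps)

lemma Basis_eq_insert_other_axes: "Basis = insert (axis k 1) (other_axes (k::'n::finite))"
  by (auto simp: other_axes_def Basis_vec_def)

lemma nn_integral_lborel_glue_axis: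
  fixes h :: "real^'n::finite \<Rightarrow> ennreal"
  assumes h[measurable]: "h \<in> borel_measurable borel"
  shows "(\<integral>\<^sup>+ z. h z \<partial>lborel) = (\<integral>\<^sup>+ x. (\<integral>\<^sup>+ t. h (glue_axis k (x,t)) \<partial>lborel) \<partial>lborel_other_axes k)"
proof -
  interpret LP: product_sigma_finite "\<lambda>_. lborel :: real measure" ..
  have "(\<integral>\<^sup>+ z. h z \<partial>lborel) = (\<integral>\<^sup>+ f. h (\<Sum>b\<in>Basis. f b *\<^sub>R b) \<partial>(\<Pi>\<^sub>M b\<in>Basis. lborel))"
    by (subst lborel_eq) (simp add: nn_integral_distr)
  also have "\<dots> = (\<integral>\<^sup>+ f. h (\<Sum>b\<in>Basis. f b *\<^sub>R b) \<partial>(\<Pi>\<^sub>M b\<in>insert (axis k 1) (other_axes k). lborel))"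
    by (simp add: Basis_eq_insert_other_axes[of k, symmetric])
  also have "\<dots> = (\<integral>\<^sup>+ x. (\<integral>\<^sup>+ t. h (\<Sum>b\<in>Basis. (x(axis k 1 := t)) b *\<^sub>R b) \<partial>lborel) \<partial>lborel_other_axes k)"
    unfolding lborel_other_axes_def
    by (subst LP.product_nn_integral_insert) (auto simp: other_axes_def Basis_eq_insert_other_axes[of k, symmetric])
  also have "\<dots> = (\<integral>\<^sup>+ x. (\<integral>\<^sup>+ t. h (glue_axis k (x,t)) \<partial>lborel) \<partial>lborel_other_axes k)"
  proof -
    have "(\<Sum>b\<in>Basis. (x(axis k 1 := t)) b *\<^sub>R b) = glue_axis k (x,t)" for x t
    proof -
      have nI: "axis k 1 \<notin> other_axes k" by (simp add: other_axes_def)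
      have "(\<Sum>b\<in>Basis. (x(axis k 1 := t)) b *\<^sub>R b)
          = (\<Sum>b\<in>insert (axis k 1) (other_axes k). (x(axis k 1 := t)) b *\<^sub>R b)"
        by (simp add: Basis_eq_insert_other_axes[of k, symmetric])
      also have "\<dots> = t *\<^sub>R axis k 1 + (\<Sum>b\<in>other_axes k. (x(axis k 1 := t)) b *\<^sub>R b)"
        using nI by (simp add: sum.insert)
      also have "(\<Sum>b\<in>other_axes k. (x(axis k 1 := t)) b *\<^sub>R b) = (\<Sum>b\<in>other_axes k. x b *\<^sub>R b)"
        using nI by (intro sum.cong) auto
      finally show ?thesis by (simp add: glue_axis_def)
    qed
    then show ?thesis by simp
  qed
  finally show ?thesis .
qed

lemma lborel_eq_distr_glue_axis:
  "(lborel :: (real^'n::finite) measure) = distr (lborel_other_axes k \<Otimes>\<^sub>M lborel) borel (glue_axis k)"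
proof (rule measure_eqI)
  show "sets lborel = sets (distr (lborel_other_axes k \<Otimes>\<^sub>M lborel) borel (glue_axis k))" by simp
  fix A :: "(real^'n) set" assume A: "A \<in> sets lborel"
  interpret Q: pair_sigma_finite "lborel_other_axes k" "lborel::real measure"
    by (rule pair_sigma_finite_lborel_other_axes)
  have "emeasure lborel A = (\<integral>\<^sup>+ z. indicator A z \<partial>lborel)" using A by simp
  also have "\<dots> = (\<integral>\<^sup>+ x. (\<integral>\<^sup>+ t. indicator A (glue_axis k (x,t)) \<partial>lborel) \<partial>lborel_other_axes k)"
    using A by (intro nn_integral_lborel_glue_axis) simp
  also have "\<dots> = (\<integral>\<^sup>+ p. indicator A (glue_axis k p) \<partial>(lborel_other_axes k \<Otimes>\<^sub>M lborel))"
    using A by (subst lborel.nn_integral_fst[symmetric]) auto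
  also have "\<dots> = (\<integral>\<^sup>+ z. indicator A z \<partial>distr (lborel_other_axes k \<Otimes>\<^sub>M lborel) borel (glue_axis k))"
    using A by (subst nn_integral_distr) auto
  also have "\<dots> = emeasure (distr (lborel_other_axes k \<Otimes>\<^sub>M lborel) borel (glue_axis k)) A"
    using A by (subst nn_integral_indicator) auto
  finally show "emeasure lborel A = emeasure (distr (lborel_other_axes k \<Otimes>\<^sub>M lborel) borel (glue_axis k)) A" .
qed


lemma integrable_lborel_glue_axis_iff:
  fixes h :: "real^'n::finite \<Rightarrow> 'b::{banach, second_countable_topology}"
  assumes "h \<in> borel_measurable borel"
  shows "integrable lborel h \<longleftrightarrow> integrable (lborel_other_axes k \<Otimes>\<^sub>M lborel) (\<lambda>p. h (glue_axis k p))"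
  using assms by (subst lborel_eq_distr_glue_axis[of k]) (simp add: integrable_distr_eq)

lemma integral_lborel_glue_axis:
  fixes h :: "real^'n::finite \<Rightarrow> 'b::{banach, second_countable_topology}"
  assumes hm: "h \<in> borel_measurable borel" and hi: "integrable lborel h"
  shows "integral\<^sup>L lborel h = (\<integral>x. (\<integral>t. h (glue_axis k (x,t)) \<partial>lborel) \<partial>lborel_other_axes k)"
proof -
  interpret Q: pair_sigma_finite "lborel_other_axes k" "lborel::real measure"
    by (rule pair_sigma_finite_lborel_other_axes)
  have i2: "integrable (lborel_other_axes k \<Otimes>\<^sub>M lborel) (\<lambda>p. h (glue_axis k p))"
    using integrable_lborel_glue_axis_iff hm hi by blast
  have "integral\<^sup>L lborel h = integral\<^sup>L (lborel_other_axes k \<Otimes>\<^sub>M lborel) (\<lambda>p. h (glue_axis k p))"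
    using hm by (subst lborel_eq_distr_glue_axis[of k]) (simp add: integral_distr)
  also have "\<dots> = (\<integral>x. (\<integral>t. h (glue_axis k (x,t)) \<partial>lborel) \<partial>lborel_other_axes k)"
    using Q.integral_fst'[OF i2] by simp
  finally show ?thesis .
qed

lemma AE_integrable_glue_axis:
  fixes h :: "real^'n::finite \<Rightarrow> 'b::{banach, second_countable_topology}"
  assumes hm: "h \<in> borel_measurable borel" and hi: "integrable lborel h"
  shows "AE x in lborel_other_axes k. integrable lborel (\<lambda>t. h (glue_axis k (x,t)))"
proof -
  interpret Q: pair_sigma_finite "lborel_other_axes k" "lborel::real measure"
    by (rule pair_sigma_finite_lborel_other_axes)
  have i2: "integrable (lborel_other_axes k \<Otimes>\<^sub>M lborel) (\<lambda>p. h (glue_axis k p))"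
    using integrable_lborel_glue_axis_iff hm hi by blast
  show ?thesis using Q.AE_integrable_fst'[OF i2] by simp
qed

section \<open>A bounded right inverse of the divergence\<close>

lemma integrable_indicator_Icc: "integrable lborel (indicator {a..b::real} :: real \<Rightarrow> real)"
  by (rule integrable_real_indicator) (auto simp: emeasure_lborel_Icc_eq)

lemma integral_tail_derivative:
  fixes \<psi> \<psi>' :: "real \<Rightarrow> real"
  assumes d: "\<And>s. (\<psi> has_real_derivative \<psi>' s) (at s)"
    and c: "continuous_on UNIV \<psi>'"
    and sup: "\<And>s. s > B \<Longrightarrow> \<psi> s = 0 \<and> \<psi>' s = 0"
  shows "(\<integral>s. (if t \<le> s then \<psi>' s else 0) \<partial>lborel) = - \<psi> t"
proof -
  define b where "b = max t B + 1"
  have tb: "t \<le> b" "b > B" by (auto simp: b_def)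
  have eq: "(\<lambda>s. if t \<le> s then \<psi>' s else 0) = (\<lambda>s. indicator {t..b} s *\<^sub>R \<psi>' s)"
  proof
    fix s show "(if t \<le> s then \<psi>' s else 0) = indicator {t..b} s *\<^sub>R \<psi>' s"
      using sup[of s] tb by (cases "s \<le> b") (auto simp: indicator_def)
  qed
  have "integral\<^sup>L lborel (\<lambda>s. indicator {t..b} s *\<^sub>R \<psi>' s) = \<psi> b - \<psi> t"
  proof (rule integral_FTC_atLeastAtMost[OF tb(1)])
    show "(\<psi> has_vector_derivative \<psi>' x) (at x within {t..b})" for x
      using d[of x] by (auto simp: has_real_derivative_iff_has_vector_derivative intro: has_vector_derivative_at_within)
    show "continuous_on {t..b} \<psi>'" using c by (rule continuous_on_subset) auto
  qed
  then show ?thesis using eq sup[of b] tb by simp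
qed

lemma integrable_truncated_product:
  fixes h w :: "real \<Rightarrow> real"
  assumes [measurable]: "h \<in> borel_measurable borel" "w \<in> borel_measurable borel"
    and hi: "integrable lborel h" and wi: "integrable lborel w"
  shows "integrable (lborel \<Otimes>\<^sub>M lborel) (\<lambda>(t, s). (if t \<le> s then h t else 0) * w s)"
proof (rule lborel_pair.Fubini_integrable)
  show "(\<lambda>(t, s). (if t \<le> s then h t else 0) * w s) \<in> borel_measurable (lborel \<Otimes>\<^sub>M lborel)"
    by measurable
  have dominated: "integrable lborel (\<lambda>s. \<bar>h t\<bar> * \<bar>w s\<bar>)" for t
    using integrable_abs[OF wi] by (rule integrable_mult_right)
  have "integrable lborel (\<lambda>s. (if t \<le> s then h t else 0) * w s)" for t
    by (rule Bochner_Integration.integrable_bound[OF dominated]) (auto simp: abs_mult)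
  then show "AE t in lborel. integrable lborel (\<lambda>s. case (t, s) of (t, s) \<Rightarrow> (if t \<le> s then h t else 0) * w s)"
    by simp
  let ?C = "\<integral>s. \<bar>w s\<bar> \<partial>lborel"
  have "(\<integral>s. \<bar>(if t \<le> s then h t else 0) * w s\<bar> \<partial>lborel) \<le> \<bar>h t\<bar> * ?C" for t
  proof -
    have "(\<integral>s. \<bar>(if t \<le> s then h t else 0) * w s\<bar> \<partial>lborel) \<le> (\<integral>s. \<bar>h t\<bar> * \<bar>w s\<bar> \<partial>lborel)"
      by (rule integral_mono[OF Bochner_Integration.integrable_bound[OF dominated] dominated])
        (auto simp: abs_mult)
    then show ?thesis by simp
  qed
  then show "integrable lborel (\<lambda>t. \<integral>s. norm (case (t, s) of (t, s) \<Rightarrow> (if t \<le> s then h t else 0) * w s) \<partial>lborel)"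
    by (intro Bochner_Integration.integrable_bound[where f="\<lambda>t. \<bar>h t\<bar> * ?C", OF
          integrable_mult_left[OF integrable_abs[OF hi]]])
      auto
qed

lemma integral_primitive_mult_derivative:
  fixes h \<psi> \<psi>' :: "real \<Rightarrow> real"
  assumes hm[measurable]: "h \<in> borel_measurable borel" and hi: "integrable lborel h"
    and d: "\<And>s. (\<psi> has_real_derivative \<psi>' s) (at s)"
    and c: "continuous_on UNIV \<psi>'"
    and sup: "\<And>s. \<bar>s\<bar> > B \<Longrightarrow> \<psi> s = 0 \<and> \<psi>' s = 0"
    and bd: "\<And>s. \<bar>\<psi>' s\<bar> \<le> C"
  shows "(\<integral>s. (\<integral>t. (if t \<le> s then h t else 0) \<partial>lborel) * \<psi>' s \<partial>lborel)
    = - (\<integral>t. h t * \<psi> t \<partial>lborel)"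
proof -
  have [measurable]: "\<psi>' \<in> borel_measurable borel"
    using c by (intro borel_measurable_continuous_onI) simp
  have "integrable lborel \<psi>'"
  proof (rule Bochner_Integration.integrable_bound)
    show "integrable lborel (\<lambda>s. C * indicator {-B..B} s)"
      using integrable_indicator_Icc by simp
    show "AE s in lborel. norm (\<psi>' s) \<le> norm (C * indicator {-B..B} s :: real)"
    proof (rule AE_I2)
      fix s show "norm (\<psi>' s) \<le> norm (C * indicator {-B..B} s :: real)"
        using bd[of s] sup[of s] by (cases "\<bar>s\<bar> \<le> B") (auto simp: indicator_def)
    qed
  qed simp
  then have "(\<integral>s. (\<integral>t. (if t \<le> s then h t else 0) * \<psi>' s \<partial>lborel) \<partial>lborel)
      = (\<integral>t. (\<integral>s. (if t \<le> s then h t else 0) * \<psi>' s \<partial>lborel) \<partial>lborel)"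
    by (intro lborel_pair.Fubini_integral integrable_truncated_product hi) simp_all
  moreover have "(\<integral>s. (if t \<le> s then h t else 0) * \<psi>' s \<partial>lborel) = h t * (- \<psi> t)" for t
  proof -
    have "(\<integral>s. (if t \<le> s then \<psi>' s else 0) \<partial>lborel) = - \<psi> t"
      by (rule integral_tail_derivative[OF d c, of B]) (use sup in force)
    moreover have "(\<lambda>s. (if t \<le> s then h t else 0) * \<psi>' s) = (\<lambda>s. h t * (if t \<le> s then \<psi>' s else 0))"
      by auto
    ultimately show ?thesis by simp
  qed
  ultimately show ?thesis by simp
qed

lemma primitive_abs_powr3_le:
  fixes h :: "real \<Rightarrow> real"
  assumes hm[measurable]: "h \<in> borel_measurable borel" and R: "R > 0"
    and sup: "\<And>t. \<bar>t\<bar> > R \<Longrightarrow> h t = 0"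
  shows "ennreal (\<bar>\<integral>t. (if t \<le> s then h t else 0) \<partial>lborel\<bar> powr 3)
     \<le> ennreal ((2*R) powr 2) * (\<integral>\<^sup>+ t. ennreal (\<bar>h t\<bar> powr 3) \<partial>lborel)"
proof (cases "(\<integral>\<^sup>+ t. ennreal (\<bar>h t\<bar> powr 3) \<partial>lborel) = \<infinity>")
  case True then show ?thesis using R by (simp add: ennreal_mult_top)
next
  case False
  have h3: "integrable lborel (\<lambda>t. \<bar>h t\<bar> powr 3)"
    by (rule integrableI_nonneg) (use False in \<open>auto simp: top.not_eq_extremum\<close>)
  define A where "A = (\<integral>t. \<bar>h t\<bar> powr 3 \<partial>lborel)"
  have A0: "A \<ge> 0" by (simp add: A_def)
  have nnA: "(\<integral>\<^sup>+ t. ennreal (\<bar>h t\<bar> powr 3) \<partial>lborel) = ennreal A"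
    unfolding A_def by (rule nn_integral_eq_integral[OF h3]) auto
  define w where "w = (\<lambda>t::real. indicator {-R..R} t :: real)"
  have [measurable]: "w \<in> borel_measurable borel" by (simp add: w_def)
  have w32: "(\<lambda>t. \<bar>w t\<bar> powr (3/2)) = w" by (auto simp: w_def indicator_def)
  have wi: "integrable lborel (\<lambda>t. \<bar>w t\<bar> powr (3/2))"
    unfolding w32 by (simp add: w_def integrable_indicator_Icc)
  have wint: "(\<integral>t. \<bar>w t\<bar> powr (3/2) \<partial>lborel) = 2 * R"
    unfolding w32 using R by (simp add: w_def)
  have hw: "integrable lborel (\<lambda>t. h t * w t)"
    by (rule integrable_mult_conjugate_powr[of 3 "3/2", OF _ _ _ _ _ h3 wi]) simp_all
  have hwb: "(\<integral>t. \<bar>h t * w t\<bar> \<partial>lborel) \<le> A powr (1/3) * (2*R) powr (2/3)"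
    using Holder_inequality[of 3 "3/2", OF _ _ _ _ _ h3 wi] by (simp add: A_def wint)
  have pt: "\<bar>(if t \<le> s then h t else 0)\<bar> \<le> \<bar>h t * w t\<bar>" for t
    using sup[of t] by (auto simp: w_def indicator_def)
  have fi: "integrable lborel (\<lambda>t. (if t \<le> s then h t else 0))"
    by (rule Bochner_Integration.integrable_bound[OF integrable_abs[OF hw]]) (use pt in auto)
  have "\<bar>\<integral>t. (if t \<le> s then h t else 0) \<partial>lborel\<bar> \<le> (\<integral>t. \<bar>h t * w t\<bar> \<partial>lborel)"
    by (rule integral_abs_bound_integral[OF fi integrable_abs[OF hw]]) (use pt in auto)
  also have "\<dots> \<le> A powr (1/3) * (2*R) powr (2/3)" by (rule hwb)
  finally have le: "\<bar>\<integral>t. (if t \<le> s then h t else 0) \<partial>lborel\<bar> \<le> A powr (1/3) * (2*R) powr (2/3)" .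
  have "\<bar>\<integral>t. (if t \<le> s then h t else 0) \<partial>lborel\<bar> powr 3 \<le> (A powr (1/3) * (2*R) powr (2/3)) powr 3"
    by (rule powr_mono2) (use le in auto)
  also have "\<dots> = A * (2*R) powr 2"
    using A0 R by (simp add: powr_mult powr_powr)
  finally have "\<bar>\<integral>t. (if t \<le> s then h t else 0) \<partial>lborel\<bar> powr 3 \<le> (2*R) powr 2 * A" by (simp only: mult.commute)
  then have "ennreal (\<bar>\<integral>t. (if t \<le> s then h t else 0) \<partial>lborel\<bar> powr 3) \<le> ennreal ((2*R) powr 2 * A)"
    by (rule ennreal_leI)
  also have "\<dots> = ennreal ((2*R) powr 2) * ennreal A" using A0 by (intro ennreal_mult) auto
  finally show ?thesis unfolding nnA .
qed

definition axial_primitive :: "'n::finite \<Rightarrow> (real^'n \<Rightarrow> real) \<Rightarrow> real^'n \<Rightarrow> real" where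
  "axial_primitive k g z = (\<integral>t. (if t \<le> z$k then g (z + (t - z$k) *\<^sub>R axis k 1) else 0) \<partial>lborel)"

lemma axial_primitive_glue_axis:
  "axial_primitive k g (glue_axis k (x,s)) = (\<integral>t. (if t \<le> s then g (glue_axis k (x,t)) else 0) \<partial>lborel)"
proof -
  have "glue_axis k (x, s + (t - s)) = glue_axis k (x,t)" for t by simp
  then show ?thesis unfolding axial_primitive_def glue_axis_nth glue_axis_shift by presburger
qed

lemma borel_measurable_vec_nth[measurable]: "(\<lambda>x::real^'n::finite. x $ k) \<in> borel_measurable borel"
  by (intro borel_measurable_continuous_onI continuous_intros)

lemma borel_measurable_axial_primitive[measurable]: assumes [measurable]: "g \<in> borel_measurable borel"
  shows "axial_primitive k g \<in> borel_measurable borel"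
  unfolding axial_primitive_def by measurable

lemma continuous_on_glue_axis: "continuous_on UNIV (\<lambda>t. glue_axis k (x,t))"
  unfolding glue_axis_def by (simp add: continuous_intros)

lemma measurable_glue_axis_line[measurable]:
  "g \<in> borel_measurable borel \<Longrightarrow> (\<lambda>t. g (glue_axis k (x,t))) \<in> borel_measurable borel"
  using measurable_comp[OF borel_measurable_continuous_onI[OF continuous_on_glue_axis] ]
  by (auto simp: comp_def)

lemma nn_integral_axial_primitive_cube_le:
  fixes g :: "real^'n::finite \<Rightarrow> real"
  assumes gm[measurable]: "g \<in> borel_measurable borel" and R: "R > 0"
    and sup: "\<And>z. \<bar>z$k\<bar> > R \<Longrightarrow> g z = 0"
  shows "(\<integral>\<^sup>+ z. indicator {z. \<bar>z$k\<bar> \<le> R} z * ennreal (\<bar>axial_primitive k g z\<bar> powr 3) \<partial>lborel)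
     \<le> ennreal ((2*R) powr 3) * (\<integral>\<^sup>+ z. ennreal (\<bar>g z\<bar> powr 3) \<partial>lborel)"
proof -
  have ms: "{z::real^'n. \<bar>z$k\<bar> \<le> R} \<in> sets borel"
    by (intro borel_closed closed_Collect_le continuous_intros)
  define J where "J x = (\<integral>\<^sup>+ t. ennreal (\<bar>g (glue_axis k (x,t))\<bar> powr 3) \<partial>lborel)" for x
  have Jm: "J \<in> borel_measurable (lborel_other_axes k)" unfolding J_def by measurable
  have "(\<integral>\<^sup>+ z. indicator {z. \<bar>z$k\<bar> \<le> R} z * ennreal (\<bar>axial_primitive k g z\<bar> powr 3) \<partial>lborel)
      = (\<integral>\<^sup>+ x. (\<integral>\<^sup>+ s. indicator {z. \<bar>z$k\<bar> \<le> R} (glue_axis k (x,s))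
          * ennreal (\<bar>axial_primitive k g (glue_axis k (x,s))\<bar> powr 3) \<partial>lborel) \<partial>lborel_other_axes k)"
    using ms by (intro nn_integral_lborel_glue_axis) measurable
  also have "\<dots> = (\<integral>\<^sup>+ x. (\<integral>\<^sup>+ s. indicator {-R..R} s
      * ennreal (\<bar>\<integral>t. (if t \<le> s then g (glue_axis k (x,t)) else 0) \<partial>lborel\<bar> powr 3) \<partial>lborel)
      \<partial>lborel_other_axes k)"
  proof -
    have "indicator {z. \<bar>z$k\<bar> \<le> R} (glue_axis k (x,s)) = (indicator {-R..R} s :: ennreal)" for x s
      by (auto simp: glue_axis_nth indicator_def)
    then show ?thesis by (simp add: axial_primitive_glue_axis)
  qed
  also have "\<dots> \<le> (\<integral>\<^sup>+ x. (\<integral>\<^sup>+ s. indicator {-R..R} s * (ennreal ((2*R) powr 2) * J x) \<partial>lborel)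
      \<partial>lborel_other_axes k)"
    unfolding J_def
    by (intro nn_integral_mono mult_left_mono primitive_abs_powr3_le) (auto simp: R sup glue_axis_nth)
  also have "\<dots> = (\<integral>\<^sup>+ x. ennreal (2*R) * (ennreal ((2*R) powr 2) * J x) \<partial>lborel_other_axes k)"
    using R by (simp add: nn_integral_multc emeasure_lborel_Icc_eq)
  also have "\<dots> = ennreal (2*R) * ennreal ((2*R) powr 2) * (\<integral>\<^sup>+ x. J x \<partial>lborel_other_axes k)"
    using Jm by (simp add: nn_integral_cmult mult.assoc)
  also have "(\<integral>\<^sup>+ x. J x \<partial>lborel_other_axes k) = (\<integral>\<^sup>+ z. ennreal (\<bar>g z\<bar> powr 3) \<partial>lborel)"
    unfolding J_def by (rule nn_integral_lborel_glue_axis[symmetric]) measurable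
  also have "ennreal (2*R) * ennreal ((2*R) powr 2) = ennreal ((2*R) powr 3)"
  proof -
    have "(2*R) * (2*R) powr 2 = (2*R) powr 3"
      using R by (simp add: powr_numeral power3_eq_cube power2_eq_square)
    then show ?thesis using R by (simp add: ennreal_mult[symmetric])
  qed
  finally show ?thesis .
qed


lemma has_derivative_glue_axis: "((\<lambda>s. glue_axis k (x,s)) has_derivative (\<lambda>h. h *\<^sub>R axis k 1)) (at s)"
  unfolding glue_axis_def by (auto intro!: derivative_eq_intros)

lemma axial_primitive_mult_derivative_on_line:
  fixes g \<phi> :: "real^'n::finite \<Rightarrow> real" and G :: "real^'n \<Rightarrow> real^'n"
  assumes gm[measurable]: "g \<in> borel_measurable borel"
    and gi: "integrable lborel (\<lambda>t. g (glue_axis k (x,t)))"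
    and d: "\<And>z. (\<phi> has_derivative (\<lambda>h. G z \<bullet> h)) (at z)"
    and c: "continuous_on UNIV G"
    and sup: "\<And>z. \<bar>z$k\<bar> > R \<Longrightarrow> \<phi> z = 0 \<and> G z = 0"
    and bd: "\<And>z. \<bar>G z $ k\<bar> \<le> C"
  shows "(\<integral>s. axial_primitive k g (glue_axis k (x,s)) * G (glue_axis k (x,s)) $ k \<partial>lborel)
    = - (\<integral>t. g (glue_axis k (x,t)) * \<phi> (glue_axis k (x,t)) \<partial>lborel)"
proof -
  have "((\<lambda>s. \<phi> (glue_axis k (x,s))) has_real_derivative G (glue_axis k (x,s)) $ k) (at s)" for s
  proof -
    have "((\<lambda>s. \<phi> (glue_axis k (x,s))) has_derivative (\<lambda>h. G (glue_axis k (x,s)) \<bullet> (h *\<^sub>R axis k 1))) (at s)"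
      using diff_chain_at[OF has_derivative_glue_axis d] by (simp add: comp_def)
    moreover have "(\<lambda>h. G (glue_axis k (x,s)) \<bullet> (h *\<^sub>R axis k 1)) = (*) (G (glue_axis k (x,s)) $ k)"
      by (auto simp: inner_axis)
    ultimately show ?thesis by (simp add: has_field_derivative_def)
  qed
  moreover have "continuous_on UNIV (\<lambda>s. G (glue_axis k (x,s)) $ k)"
    by (intro continuous_on_component continuous_on_compose2[OF c continuous_on_glue_axis]) auto
  ultimately have "(\<integral>s. (\<integral>t. (if t \<le> s then g (glue_axis k (x,t)) else 0) \<partial>lborel) * G (glue_axis k (x,s)) $ k \<partial>lborel)
      = - (\<integral>t. g (glue_axis k (x,t)) * \<phi> (glue_axis k (x,t)) \<partial>lborel)"
  proof (rule integral_primitive_mult_derivative[OF measurable_glue_axis_line[OF gm] gi])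
    show "\<bar>s\<bar> > R \<Longrightarrow> \<phi> (glue_axis k (x,s)) = 0 \<and> G (glue_axis k (x,s)) $ k = 0" for s
      using sup[of "glue_axis k (x,s)"] by (simp add: glue_axis_nth)
  qed (rule bd)
  then show ?thesis by (simp add: axial_primitive_glue_axis)
qed

lemma integral_axial_primitive_mult_derivative:
  fixes g \<phi> :: "real^'n::finite \<Rightarrow> real" and G :: "real^'n \<Rightarrow> real^'n"
  assumes gm[measurable]: "g \<in> borel_measurable borel" and gi: "integrable lborel g"
    and d: "\<And>z. (\<phi> has_derivative (\<lambda>h. G z \<bullet> h)) (at z)"
    and c: "continuous_on UNIV G"
    and sup: "\<And>z. \<bar>z$k\<bar> > R \<Longrightarrow> \<phi> z = 0 \<and> G z = 0"
    and bd: "\<And>z. \<bar>G z $ k\<bar> \<le> C"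
    and i1: "integrable lborel (\<lambda>z. axial_primitive k g z * G z $ k)"
    and i2: "integrable lborel (\<lambda>z. g z * \<phi> z)"
  shows "(\<integral>z. axial_primitive k g z * G z $ k \<partial>lborel) = - (\<integral>z. g z * \<phi> z \<partial>lborel)"
proof -
  have [measurable]: "G \<in> borel_measurable borel" using c by (rule borel_measurable_continuous_onI)
  have [measurable]: "\<phi> \<in> borel_measurable borel"
    using d by (intro borel_measurable_continuous_onI has_derivative_continuous_on)
      (auto intro: has_derivative_at_withinI)
  have "(\<integral>z. axial_primitive k g z * G z $ k \<partial>lborel)
      = (\<integral>x. (\<integral>s. axial_primitive k g (glue_axis k (x,s)) * G (glue_axis k (x,s)) $ k \<partial>lborel)
          \<partial>lborel_other_axes k)"
    by (rule integral_lborel_glue_axis[OF _ i1]) measurable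
  also have "\<dots> = (\<integral>x. - (\<integral>t. g (glue_axis k (x,t)) * \<phi> (glue_axis k (x,t)) \<partial>lborel) \<partial>lborel_other_axes k)"
  proof (rule integral_cong_AE)
    show "AE x in lborel_other_axes k.
        (\<integral>s. axial_primitive k g (glue_axis k (x,s)) * G (glue_axis k (x,s)) $ k \<partial>lborel)
        = - (\<integral>t. g (glue_axis k (x,t)) * \<phi> (glue_axis k (x,t)) \<partial>lborel)"
      using AE_integrable_glue_axis[OF gm gi]
    proof eventually_elim
      case (elim x)
      show ?case by (rule axial_primitive_mult_derivative_on_line[OF gm elim d c sup bd])
    qed
    show "(\<lambda>x. \<integral>s. axial_primitive k g (glue_axis k (x,s)) * G (glue_axis k (x,s)) $ k \<partial>lborel)
        \<in> borel_measurable (lborel_other_axes k)"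
      by measurable
    show "(\<lambda>x. - (\<integral>t. g (glue_axis k (x,t)) * \<phi> (glue_axis k (x,t)) \<partial>lborel))
        \<in> borel_measurable (lborel_other_axes k)"
      by measurable
  qed
  also have "\<dots> = - (\<integral>z. g z * \<phi> z \<partial>lborel)"
    using integral_lborel_glue_axis[OF _ i2] by simp
  finally show ?thesis .
qed

lemma borel_measurable_lebesgue_on_of_borel:
  assumes "f \<in> borel_measurable (borel :: ('a::euclidean_space) measure)"
  shows "f \<in> borel_measurable (lebesgue_on \<Omega>)"
  using assms by (intro measurable_restrict_space1 measurable_completion) simp

lemma
  fixes f F :: "'a::euclidean_space \<Rightarrow> 'b::{banach, second_countable_topology}"
  assumes \<Omega>: "open \<Omega>" and fm: "f \<in> borel_measurable (lebesgue_on \<Omega>)"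
    and Fm: "F \<in> borel_measurable borel"
    and ae: "AE x in lborel. indicator \<Omega> x *\<^sub>R f x = F x"
  shows integrable_lebesgue_on_iff_lborel: "integrable (lebesgue_on \<Omega>) f \<longleftrightarrow> integrable lborel F"
    and integral_lebesgue_on_eq_lborel: "integral\<^sup>L (lebesgue_on \<Omega>) f = integral\<^sup>L lborel F"
proof -
  have S: "\<Omega> \<inter> space lebesgue \<in> sets lebesgue"
    using \<Omega> by (simp add: borel_open sets_completionI_sets)
  have m1: "(\<lambda>x. indicator \<Omega> x *\<^sub>R f x) \<in> borel_measurable lebesgue"
    using borel_measurable_restrict_space_iff[OF S, THEN iffD1, OF fm] by simp
  have FmL: "F \<in> borel_measurable lborel" using Fm by simp
  have m2: "F \<in> borel_measurable lebesgue" using measurable_completion[OF FmL] .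
  have ae': "AE x in lebesgue. indicator \<Omega> x *\<^sub>R f x = F x" using AE_completion[OF ae] .
  have "integrable (lebesgue_on \<Omega>) f \<longleftrightarrow> integrable lebesgue (\<lambda>x. indicator \<Omega> x *\<^sub>R f x)"
    by (rule integrable_restrict_space[OF S])
  also have "\<dots> \<longleftrightarrow> integrable lebesgue F"
    by (rule integrable_cong_AE[OF m1 m2 ae'])
  also have "\<dots> \<longleftrightarrow> integrable lborel F" by (rule integrable_completion[OF FmL])
  finally show "integrable (lebesgue_on \<Omega>) f \<longleftrightarrow> integrable lborel F" .
  have "integral\<^sup>L (lebesgue_on \<Omega>) f = integral\<^sup>L lebesgue (\<lambda>x. indicator \<Omega> x *\<^sub>R f x)"
    by (rule integral_restrict_space[OF S])
  also have "\<dots> = integral\<^sup>L lebesgue F"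
    by (rule integral_cong_AE[OF m1 m2 ae'])
  also have "\<dots> = integral\<^sup>L lborel F" by (rule integral_completion[OF FmL])
  finally show "integral\<^sup>L (lebesgue_on \<Omega>) f = integral\<^sup>L lborel F" .
qed

lemma borel_zero_extension:
  fixes g :: "'a::euclidean_space \<Rightarrow> real"
  assumes \<Omega>: "open \<Omega>" and gm: "g \<in> borel_measurable (lebesgue_on \<Omega>)"
  obtains g0 where "g0 \<in> borel_measurable borel" and "\<And>x. x \<notin> \<Omega> \<Longrightarrow> g0 x = 0"
    and "AE x in lborel. indicator \<Omega> x * g x = g0 x"
proof -
  have S: "\<Omega> \<inter> space lebesgue \<in> sets lebesgue"
    using \<Omega> by (simp add: borel_open sets_completionI_sets)
  have "(\<lambda>x. indicator \<Omega> x *\<^sub>R g x) \<in> borel_measurable lebesgue"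
    using borel_measurable_restrict_space_iff[OF S, THEN iffD1, OF gm] .
  then obtain g1 where g1m: "g1 \<in> borel_measurable lborel"
    and g1ae: "AE x in lborel. indicator \<Omega> x *\<^sub>R g x = g1 x"
    using completion_ex_borel_measurable_real by blast
  show ?thesis
  proof (rule that[of "\<lambda>x. indicator \<Omega> x * g1 x"])
    show "(\<lambda>x. indicator \<Omega> x * g1 x) \<in> borel_measurable borel"
      using g1m \<Omega> by (simp add: borel_open)
    show "AE x in lborel. indicator \<Omega> x * g x = indicator \<Omega> x * g1 x"
      using g1ae by eventually_elim (auto simp: indicator_def)
  qed simp
qed

lemma gradient_zero_outside:
  fixes \<phi> :: "real^'n::finite \<Rightarrow> real"
  assumes d: "(\<phi> has_derivative (\<lambda>h. G \<bullet> h)) (at z)"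
    and K: "closed K" "z \<notin> K" and z0: "\<And>y. y \<notin> K \<Longrightarrow> \<phi> y = 0"
  shows "G = 0"
proof -
  have "(\<phi> has_derivative (\<lambda>h. 0)) (at z)"
    by (rule has_derivative_transform_within_open[where s="- K", OF has_derivative_const])
      (use K z0 in auto)
  with d have "(\<lambda>h. G \<bullet> h) = (\<lambda>h. 0)" by (rule has_derivative_unique)
  then have "G \<bullet> G = 0" by meson
  then show ?thesis by simp
qed

lemma test_fun_vanishes:
  assumes "test_fun \<Omega> \<phi> G" and "x \<notin> closure {x. \<phi> x \<noteq> 0}"
  shows "\<phi> x = 0" and "G x = 0"
proof -
  show "\<phi> x = 0" using assms(2) closure_subset[of "{x. \<phi> x \<noteq> 0}"] by blast
  show "G x = 0"
  proof (rule gradient_zero_outside[of \<phi> "G x" x "closure {x. \<phi> x \<noteq> 0}"])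
    show "(\<phi> has_derivative (\<lambda>h. G x \<bullet> h)) (at x)" using assms(1) by (simp add: test_fun_def)
    show "\<phi> y = 0" if "y \<notin> closure {x. \<phi> x \<noteq> 0}" for y
      using that closure_subset[of "{x. \<phi> x \<noteq> 0}"] by blast
  qed (use assms(2) in auto)
qed

lemma test_fun_bounded:
  assumes tf: "test_fun \<Omega> \<phi> G"
  obtains C where "C \<ge> 0" and "\<And>x. \<bar>\<phi> x\<bar> \<le> C" and "\<And>x. norm (G x) \<le> C"
proof -
  define K where "K = closure {x. \<phi> x \<noteq> 0}"
  have "compact K" and cG: "continuous_on UNIV G" using tf by (auto simp: test_fun_def K_def)
  moreover have "continuous_on UNIV \<phi>"
    using tf by (intro has_derivative_continuous_on) (auto simp: test_fun_def intro: has_derivative_at_withinI)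
  ultimately have "bounded ((\<lambda>x. (\<phi> x, G x)) ` K)"
    using cG by (intro compact_imp_bounded compact_continuous_image continuous_on_Pair)
      (auto intro: continuous_on_subset)
  then obtain B where B: "\<And>x. x \<in> K \<Longrightarrow> norm (\<phi> x, G x) \<le> B" by (auto simp: bounded_iff)
  show ?thesis
  proof (rule that[of "max B 0"])
    fix x
    have "norm (\<phi> x) \<le> max B 0 \<and> norm (G x) \<le> max B 0"
    proof (cases "x \<in> K")
      case True
      then show ?thesis
        using B[of x] norm_fst_le[of "\<phi> x" "G x"] norm_snd_le[of "G x" "\<phi> x"] by linarith
    qed (use test_fun_vanishes[OF tf, of x] K_def in auto)
    then show "\<bar>\<phi> x\<bar> \<le> max B 0" and "norm (G x) \<le> max B 0" by auto
  qed simp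
qed

lemma abs_le_one_plus_powr3: "\<bar>a::real\<bar> \<le> 1 + \<bar>a\<bar> powr 3"
proof (cases "\<bar>a\<bar> \<le> 1")
  case False
  then have "\<bar>a\<bar> powr 1 \<le> \<bar>a\<bar> powr 3" by (intro powr_mono) auto
  then show ?thesis by simp
qed (smt (verit) powr_ge_zero)

lemma
  fixes g :: "real^'n::finite \<Rightarrow> real"
  assumes gm[measurable]: "g \<in> borel_measurable borel" and R: "R > 0"
    and sup: "\<And>z. \<bar>z$k\<bar> > R \<Longrightarrow> g z = 0"
    and g3: "integrable lborel (\<lambda>z. \<bar>g z\<bar> powr 3)"
  shows integrable_axial_primitive_cube:
      "integrable lborel (\<lambda>z. indicator {z. \<bar>z$k\<bar> \<le> R} z * \<bar>axial_primitive k g z\<bar> powr 3)"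
    and integral_axial_primitive_cube_le:
      "(\<integral>z. indicator {z. \<bar>z$k\<bar> \<le> R} z * \<bar>axial_primitive k g z\<bar> powr 3 \<partial>lborel)
        \<le> (2*R) powr 3 * (\<integral>z. \<bar>g z\<bar> powr 3 \<partial>lborel)"
proof -
  define W where "W z = indicator {z. \<bar>z$k\<bar> \<le> R} z * \<bar>axial_primitive k g z\<bar> powr 3" for z
  have [measurable]: "{z::real^'n. \<bar>z$k\<bar> \<le> R} \<in> sets borel"
    by (intro borel_closed closed_Collect_le continuous_intros)
  have Wm[measurable]: "W \<in> borel_measurable borel" unfolding W_def by measurable
  have "(\<integral>\<^sup>+ z. ennreal (W z) \<partial>lborel)
      = (\<integral>\<^sup>+ z. indicator {z. \<bar>z$k\<bar> \<le> R} z * ennreal (\<bar>axial_primitive k g z\<bar> powr 3) \<partial>lborel)"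
    by (intro nn_integral_cong) (simp add: W_def indicator_def)
  also have "\<dots> \<le> ennreal ((2*R) powr 3) * (\<integral>\<^sup>+ z. ennreal (\<bar>g z\<bar> powr 3) \<partial>lborel)"
    by (rule nn_integral_axial_primitive_cube_le[OF gm R sup])
  also have "\<dots> = ennreal ((2*R) powr 3 * (\<integral>z. \<bar>g z\<bar> powr 3 \<partial>lborel))"
    using g3 by (simp add: nn_integral_eq_integral ennreal_mult)
  finally have nnW: "(\<integral>\<^sup>+ z. ennreal (W z) \<partial>lborel) \<le> ennreal ((2*R) powr 3 * (\<integral>z. \<bar>g z\<bar> powr 3 \<partial>lborel))" .
  show Wi: "integrable lborel W"
    by (rule integrableI_nonneg) (use nnW in \<open>auto simp: W_def top.not_eq_extremum intro: le_less_trans\<close>)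
  have "ennreal (\<integral>z. W z \<partial>lborel) = (\<integral>\<^sup>+ z. ennreal (W z) \<partial>lborel)"
    by (rule nn_integral_eq_integral[OF Wi, symmetric]) (auto simp: W_def)
  with nnW have "ennreal (\<integral>z. W z \<partial>lborel) \<le> ennreal ((2*R) powr 3 * (\<integral>z. \<bar>g z\<bar> powr 3 \<partial>lborel))"
    by (rule ord_eq_le_trans[rotated])
  moreover have "0 \<le> (2*R) powr 3 * (\<integral>z. \<bar>g z\<bar> powr 3 \<partial>lborel)"
    by simp
  ultimately show "(\<integral>z. W z \<partial>lborel) \<le> (2*R) powr 3 * (\<integral>z. \<bar>g z\<bar> powr 3 \<partial>lborel)"
    by (simp add: ennreal_le_iff)
qed

text \<open>Integrate by parts along each line parallel to \<open>e\<^sub>k\<close>.\<close>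

lemma weak_div_axial_primitive:
  fixes \<Omega> :: "(real^'n::finite) set" and g :: "real^'n \<Rightarrow> real"
  assumes \<Omega>: "open \<Omega>" and slab: "\<And>x. x \<in> \<Omega> \<Longrightarrow> \<bar>x$k\<bar> \<le> R"
    and gm[measurable]: "g \<in> borel_measurable borel" and gi: "integrable lborel g"
    and g0: "\<And>x. x \<notin> \<Omega> \<Longrightarrow> g x = 0"
    and Wi: "integrable lborel (\<lambda>z. indicator {z. \<bar>z$k\<bar> \<le> R} z * \<bar>axial_primitive k g z\<bar> powr 3)"
  shows "weak_div \<Omega> (\<lambda>z. axial_primitive k g z *\<^sub>R axis k 1) g"
  unfolding weak_div_def
proof (intro allI impI)
  fix \<phi> G assume tf: "test_fun \<Omega> \<phi> G"
  define K where "K = closure {x. \<phi> x \<noteq> 0}"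
  define V where "V = axial_primitive k g"
  have d: "\<And>x. (\<phi> has_derivative (\<lambda>h. G x \<bullet> h)) (at x)" and cG: "continuous_on UNIV G"
    and cK: "compact K" and K\<Omega>: "K \<subseteq> \<Omega>" using tf by (auto simp: test_fun_def K_def)
  have out: "x \<notin> K \<Longrightarrow> \<phi> x = 0 \<and> G x = 0" for x
    unfolding K_def using test_fun_vanishes[OF tf, of x] by blast
  obtain C where C0: "C \<ge> 0" and C\<phi>: "\<And>x. \<bar>\<phi> x\<bar> \<le> C" and CG: "\<And>x. norm (G x) \<le> C"
    using test_fun_bounded[OF tf] by metis
  have CGk: "\<bar>G x $ k\<bar> \<le> C" for x
    using CG[of x] component_le_norm_cart[of "G x" k] by linarith
  have [measurable]: "G \<in> borel_measurable borel" using cG by (rule borel_measurable_continuous_onI)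
  have [measurable]: "\<phi> \<in> borel_measurable borel"
    using d by (intro borel_measurable_continuous_onI has_derivative_continuous_on)
      (auto intro: has_derivative_at_withinI)
  have [measurable]: "K \<in> sets borel" using cK by (simp add: borel_closed compact_imp_closed)
  have "integrable lborel (\<lambda>z. V z * G z $ k)"
  proof (rule Bochner_Integration.integrable_bound)
    show "integrable lborel (\<lambda>z. C * (indicator K z + indicator {z. \<bar>z$k\<bar> \<le> R} z * \<bar>V z\<bar> powr 3))"
    proof -
      have "integrable lborel (indicator K :: _ \<Rightarrow> real)"
        using emeasure_compact_finite[OF cK] by (intro integrable_real_indicator) auto
      then show ?thesis using Wi unfolding V_def by simp
    qed
    show "AE z in lborel. norm (V z * G z $ k) \<le> norm (C * (indicator K z + indicator {z. \<bar>z$k\<bar> \<le> R} z * \<bar>V z\<bar> powr 3))"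
    proof (rule AE_I2)
      fix z
      show "norm (V z * G z $ k) \<le> norm (C * (indicator K z + indicator {z. \<bar>z$k\<bar> \<le> R} z * \<bar>V z\<bar> powr 3))"
      proof (cases "z \<in> K")
        case True
        then have "\<bar>z$k\<bar> \<le> R" using K\<Omega> slab by auto
        have "\<bar>V z * G z $ k\<bar> \<le> \<bar>V z\<bar> * C" by (simp add: abs_mult mult_left_mono CGk)
        also have "\<dots> \<le> (1 + \<bar>V z\<bar> powr 3) * C" by (intro mult_right_mono abs_le_one_plus_powr3 C0)
        finally show ?thesis using True \<open>\<bar>z$k\<bar> \<le> R\<close> C0 by (simp add: mult.commute)
      qed (use out C0 in simp)
    qed
  qed (simp add: V_def)
  moreover have "integrable lborel (\<lambda>z. g z * \<phi> z)"
  proof (rule Bochner_Integration.integrable_bound)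
    show "integrable lborel (\<lambda>z. C * \<bar>g z\<bar>)" using gi by simp
    show "AE z in lborel. norm (g z * \<phi> z) \<le> norm (C * \<bar>g z\<bar>)"
      using C\<phi> C0 by (intro AE_I2) (simp add: abs_mult mult.commute mult_right_mono)
  qed simp
  moreover have "\<bar>z$k\<bar> > R \<Longrightarrow> \<phi> z = 0 \<and> G z = 0" for z
    using slab[of z] K\<Omega> out[of z] by auto
  ultimately have main: "(\<integral>z. V z * G z $ k \<partial>lborel) = - (\<integral>z. g z * \<phi> z \<partial>lborel)"
    unfolding V_def by (intro integral_axial_primitive_mult_derivative[OF gm gi d cG _ CGk]) auto
  have "integral\<^sup>L (lebesgue_on \<Omega>) (\<lambda>x. (V x *\<^sub>R axis k 1) \<bullet> G x) = (\<integral>z. V z * G z $ k \<partial>lborel)"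
  proof (rule integral_lebesgue_on_eq_lborel[OF \<Omega>])
    show "AE x in lborel. indicator \<Omega> x *\<^sub>R ((V x *\<^sub>R axis k 1) \<bullet> G x) = V x * G x $ k"
    proof (rule AE_I2)
      fix x
      show "indicator \<Omega> x *\<^sub>R ((V x *\<^sub>R axis k 1) \<bullet> G x) = V x * G x $ k"
      proof (cases "x \<in> \<Omega>")
        case False
        then have "G x = 0" using K\<Omega> out by blast
        then show ?thesis using False by simp
      qed (simp add: inner_axis')
    qed
  qed (auto intro: borel_measurable_lebesgue_on_of_borel simp: V_def)
  moreover have "integral\<^sup>L (lebesgue_on \<Omega>) (\<lambda>x. g x * \<phi> x) = (\<integral>z. g z * \<phi> z \<partial>lborel)"
  proof (rule integral_lebesgue_on_eq_lborel[OF \<Omega>])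
    show "AE x in lborel. indicator \<Omega> x *\<^sub>R (g x * \<phi> x) = g x * \<phi> x"
      using g0 by (intro AE_I2) (auto simp: indicator_def)
  qed (auto intro: borel_measurable_lebesgue_on_of_borel)
  ultimately show "integral\<^sup>L (lebesgue_on \<Omega>) (\<lambda>x. (V x *\<^sub>R axis k 1) \<bullet> G x)
      = - integral\<^sup>L (lebesgue_on \<Omega>) (\<lambda>x. g x * \<phi> x)"
    using main by simp
qed

lemma powr3_le_cancel:
  fixes a b c :: real
  assumes "0 \<le> a" "0 \<le> b" "a powr 3 \<le> c * b powr 3" "0 \<le> c"
  shows "a \<le> c powr (1/3) * b"
proof -
  have "a = (a powr 3) powr (1/3)" using assms(1) by (simp only: powr_powr) simp
  also have "\<dots> \<le> (c * b powr 3) powr (1/3)" using assms by (intro powr_mono2) auto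
  also have "\<dots> = c powr (1/3) * (b powr 3) powr (1/3)" using assms by (simp add: powr_mult)
  also have "\<dots> = c powr (1/3) * b" using assms(2) by (simp only: powr_powr) simp
  finally show ?thesis .
qed

lemma div_right_inverse:
  fixes \<Omega> :: "(real^'n::finite) set" and g :: "real^'n \<Rightarrow> real"
  assumes \<Omega>: "open \<Omega>" and R: "R > 0" and \<Omega>R: "\<Omega> \<subseteq> cball 0 R" and g: "Lp 3 \<Omega> g"
  obtains v dv where "Lp 3 \<Omega> v" and "Lp 3 \<Omega> dv" and "weak_div \<Omega> v dv"
    and "AE x in lebesgue_on \<Omega>. dv x = g x" and "Lp_norm 3 \<Omega> v \<le> 2 * R * Lp_norm 3 \<Omega> g"
proof -
  obtain k :: 'n where True by blast
  have [measurable]: "\<Omega> \<in> sets borel" using \<Omega> by (simp add: borel_open)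
  have slab: "x \<in> \<Omega> \<Longrightarrow> \<bar>x$k\<bar> \<le> R" for x
    using \<Omega>R component_le_norm_cart[of x k] by (auto simp: dist_norm)
  have gm: "g \<in> borel_measurable (lebesgue_on \<Omega>)"
    and gi: "integrable (lebesgue_on \<Omega>) (\<lambda>x. \<bar>g x\<bar> powr 3)" using g by (auto simp: Lp_def)
  obtain g0 where [measurable]: "g0 \<in> borel_measurable borel" and g0out: "\<And>x. x \<notin> \<Omega> \<Longrightarrow> g0 x = 0"
    and g0ae: "AE x in lborel. indicator \<Omega> x * g x = g0 x"
    using borel_zero_extension[OF \<Omega> gm] by blast
  have "AE x in lborel. indicator \<Omega> x *\<^sub>R \<bar>g x\<bar> powr 3 = \<bar>g0 x\<bar> powr 3"
    using g0ae by eventually_elim (auto simp: indicator_def g0out)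
  note g0_eqs = integrable_lebesgue_on_iff_lborel[OF \<Omega> _ _ this]
    integral_lebesgue_on_eq_lborel[OF \<Omega> _ _ this]
  have g03: "integrable lborel (\<lambda>x. \<bar>g0 x\<bar> powr 3)" using g0_eqs(1) gi gm by simp
  have "integrable lborel (indicator \<Omega> :: _ \<Rightarrow> real)"
    using emeasure_bounded_finite[OF bounded_subset[OF bounded_cball \<Omega>R]]
    by (intro integrable_real_indicator) auto
  then have g0i: "integrable lborel g0"
  proof (rule Bochner_Integration.integrable_bound[OF Bochner_Integration.integrable_add[OF _ g03]])
    show "AE x in lborel. norm (g0 x) \<le> norm (indicator \<Omega> x + \<bar>g0 x\<bar> powr 3 :: real)"
      using abs_le_one_plus_powr3 g0out by (intro AE_I2) (auto simp: indicator_def)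
  qed simp
  define V where "V = axial_primitive k g0"
  define W where "W z = indicator {z. \<bar>z$k\<bar> \<le> R} z * \<bar>V z\<bar> powr 3" for z
  have "\<bar>z$k\<bar> > R \<Longrightarrow> g0 z = 0" for z
    using g0out slab by force
  note W_bounds = integrable_axial_primitive_cube[OF _ R this g03]
    integral_axial_primitive_cube_le[OF _ R this g03]
  have Wi: "integrable lborel W"
    and Wb: "(\<integral>z. W z \<partial>lborel) \<le> (2*R) powr 3 * (\<integral>z. \<bar>g0 z\<bar> powr 3 \<partial>lborel)"
    using W_bounds unfolding W_def V_def by simp_all
  define v where "v z = V z *\<^sub>R (axis k 1 :: real^'n)" for z
  have [measurable]: "v \<in> borel_measurable borel" unfolding v_def V_def by measurable
  have v3m: "(\<lambda>x. norm (v x) powr 3) \<in> borel_measurable (lebesgue_on \<Omega>)"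
    by (rule borel_measurable_lebesgue_on_of_borel) measurable
  have V3m: "(\<lambda>z. indicator \<Omega> z * \<bar>V z\<bar> powr 3) \<in> borel_measurable borel"
    unfolding V_def by measurable
  have "AE x in lborel. indicator \<Omega> x *\<^sub>R norm (v x) powr 3 = indicator \<Omega> x * \<bar>V x\<bar> powr 3"
    by (simp add: v_def)
  note v_eqs = integrable_lebesgue_on_iff_lborel[OF \<Omega> v3m V3m this]
    integral_lebesgue_on_eq_lborel[OF \<Omega> v3m V3m this]
  have dominated: "norm (indicator \<Omega> x * \<bar>V x\<bar> powr 3) \<le> W x" for x
    by (auto simp: W_def indicator_def slab)
  have Fi: "integrable lborel (\<lambda>z. indicator \<Omega> z * \<bar>V z\<bar> powr 3)"
  proof (rule Bochner_Integration.integrable_bound[OF Wi])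
    show "AE x in lborel. norm (indicator \<Omega> x * \<bar>V x\<bar> powr 3) \<le> norm (W x)"
    proof (rule AE_I2)
      fix x
      show "norm (indicator \<Omega> x * \<bar>V x\<bar> powr 3) \<le> norm (W x)"
        using dominated[of x] abs_ge_self[of "W x"] by (simp only: real_norm_def)
    qed
  qed (use V3m in simp)
  have Lv: "Lp 3 \<Omega> v"
    unfolding Lp_def using v_eqs(1) Fi by (auto intro: borel_measurable_lebesgue_on_of_borel)
  have "Lp_norm 3 \<Omega> v powr 3 = (\<integral>z. indicator \<Omega> z * \<bar>V z\<bar> powr 3 \<partial>lborel)"
    using v_eqs(2) Lp_norm_powr[of 3 \<Omega> v] by simp
  also have "\<dots> \<le> (\<integral>z. W z \<partial>lborel)"
    using dominated by (intro integral_mono[OF Fi Wi]) auto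
  also have "\<dots> \<le> (2*R) powr 3 * Lp_norm 3 \<Omega> g powr 3"
    using Wb g0_eqs(2) gm Lp_norm_powr[of 3 \<Omega> g] by simp
  finally have "Lp_norm 3 \<Omega> v \<le> ((2*R) powr 3) powr (1/3) * Lp_norm 3 \<Omega> g"
    by (rule powr3_le_cancel[OF Lp_norm_nonneg Lp_norm_nonneg]) simp
  moreover have "((2*R) powr 3) powr (1/3) = 2*R"
    using R by (simp only: powr_powr) simp
  ultimately have vb: "Lp_norm 3 \<Omega> v \<le> 2 * R * Lp_norm 3 \<Omega> g"
    by simp
  have ae3: "AE x in lborel. indicator \<Omega> x *\<^sub>R \<bar>g0 x\<bar> powr 3 = \<bar>g0 x\<bar> powr 3"
    by (rule AE_I2) (auto simp: indicator_def g0out)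
  have m3: "(\<lambda>x. \<bar>g0 x\<bar> powr 3) \<in> borel_measurable (lebesgue_on \<Omega>)"
    and m: "g0 \<in> borel_measurable (lebesgue_on \<Omega>)"
    by (rule borel_measurable_lebesgue_on_of_borel, measurable)+
  have "(\<lambda>x. \<bar>g0 x\<bar> powr 3) \<in> borel_measurable borel" by measurable
  from integrable_lebesgue_on_iff_lborel[OF \<Omega> m3 this ae3] have Lg0: "Lp 3 \<Omega> g0"
    using g03 m unfolding Lp_def real_norm_def by blast
  have "AE x in lebesgue_on \<Omega>. g0 x = g x"
  proof -
    have S: "\<Omega> \<inter> space lebesgue \<in> sets lebesgue"
      using \<Omega> by (simp add: borel_open sets_completionI_sets)
    have "AE x in lebesgue. x \<in> \<Omega> \<longrightarrow> g0 x = g x"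
      using AE_completion[OF g0ae] by eventually_elim (auto simp: indicator_def)
    then show ?thesis using AE_restrict_space_iff[OF S] by blast
  qed
  moreover have "weak_div \<Omega> v g0"
    unfolding v_def V_def
    by (intro weak_div_axial_primitive[OF \<Omega> slab _ g0i g0out]) (use W_bounds(1) in simp_all)
  ultimately show ?thesis using that Lv Lg0 vb by blast
qed

section \<open>A priori estimates for the regularized problem\<close>

lemma borel_measurable_sgn_sqrt[measurable]: "sgn_sqrt \<in> borel_measurable borel"
  unfolding sgn_sqrt_def by measurable

lemma abs_sgn_sqrt: "\<bar>sgn_sqrt s\<bar> = \<bar>s\<bar> powr (1/2)"
  by (simp add: sgn_sqrt_def abs_div powr_half_sqrt real_div_sqrt)

lemma sgn_sqrt_mult_self: "sgn_sqrt s * s = \<bar>sgn_sqrt s\<bar> powr 3"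
proof -
  have "sgn_sqrt s * s = \<bar>sgn_sqrt s\<bar> * \<bar>s\<bar>"
    by (auto simp: sgn_sqrt_def abs_mult abs_div divide_less_0_iff mult_less_0_iff
        zero_less_mult_iff zero_less_divide_iff)
  also have "\<dots> = \<bar>s\<bar> powr (1/2) * \<bar>s\<bar> powr 1" by (simp add: abs_sgn_sqrt)
  also have "\<dots> = \<bar>s\<bar> powr (1/2 + 1)" by (rule powr_add[symmetric])
  also have "\<dots> = \<bar>sgn_sqrt s\<bar> powr 3" by (simp add: abs_sgn_sqrt powr_powr)
  finally show ?thesis .
qed

lemma Lp_sgn_sqrt:
  assumes "Lp (3/2) \<Omega> u"
  shows "Lp 3 \<Omega> (\<lambda>x. sgn_sqrt (u x))"
proof (rule Lp_cong_norm)
  show "Lp 3 \<Omega> (\<lambda>x. norm (u x) powr (1/2))" using assms by (intro Lp_norm_powr_Lp) auto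
  have [measurable]: "u \<in> borel_measurable (lebesgue_on \<Omega>)"
    using assms by (simp add: Lp_def)
  show "(\<lambda>x. sgn_sqrt (u x)) \<in> borel_measurable (lebesgue_on \<Omega>)"
    by measurable
qed (simp add: abs_sgn_sqrt)

lemma Lp_norm_sgn_sqrt: "Lp_norm 3 \<Omega> (\<lambda>x. sgn_sqrt (u x)) ^ 2 = Lp_norm (3/2) \<Omega> u"
proof -
  have "Lp_norm 3 \<Omega> (\<lambda>x. sgn_sqrt (u x)) = Lp_norm 3 \<Omega> (\<lambda>x. norm (u x) powr (1/2))"
    by (rule Lp_norm_cong_norm) (simp add: abs_sgn_sqrt)
  also have "\<dots> = Lp_norm (3/2) \<Omega> u powr (1/2)"
    using Lp_norm_norm_powr[of 3 "1/2" \<Omega> u] by simp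
  finally show ?thesis
    using Lp_norm_nonneg[of "3/2" \<Omega> u] by (simp add: powr_powr flip: powr_realpow')
qed

lemma
  assumes "Lp 3 \<Omega> u"
  shows Lp_norm_square_Lp: "Lp (3/2) \<Omega> (\<lambda>x. norm (u x) ^ 2)"
    and Lp_norm_norm_square: "Lp_norm (3/2) \<Omega> (\<lambda>x. norm (u x) ^ 2) = Lp_norm 3 \<Omega> u ^ 2"
proof -
  have "Lp (3/2) \<Omega> (\<lambda>x. norm (u x) powr 2)"
    using assms by (intro Lp_norm_powr_Lp) auto
  then show "Lp (3/2) \<Omega> (\<lambda>x. norm (u x) ^ 2)" by simp
  show "Lp_norm (3/2) \<Omega> (\<lambda>x. norm (u x) ^ 2) = Lp_norm 3 \<Omega> u ^ 2"
    using Lp_norm_norm_powr[of "3/2" 2 \<Omega> u] Lp_norm_nonneg[of 3 \<Omega> u] by simp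
qed

lemma
  fixes u :: "real^'n \<Rightarrow> real"
  assumes u: "Lp 3 \<Omega> u"
  shows Lp_abs_mult_self: "Lp (3/2) \<Omega> (\<lambda>x. \<bar>u x\<bar> * u x)"
    and Lp_norm_abs_mult_self: "Lp_norm (3/2) \<Omega> (\<lambda>x. \<bar>u x\<bar> * u x) = Lp_norm 3 \<Omega> u ^ 2"
proof -
  have [measurable]: "u \<in> borel_measurable (lebesgue_on \<Omega>)" using u by (simp add: Lp_def)
  have eq: "norm (\<bar>u x\<bar> * u x) = norm (u x) ^ 2" for x by (simp add: abs_mult power2_eq_square)
  show "Lp (3/2) \<Omega> (\<lambda>x. \<bar>u x\<bar> * u x)"
    by (rule Lp_cong_norm[OF Lp_norm_square_Lp[OF u]]) (simp_all only: eq, measurable)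
  show "Lp_norm (3/2) \<Omega> (\<lambda>x. \<bar>u x\<bar> * u x) = Lp_norm 3 \<Omega> u ^ 2"
  proof -
    have "Lp_norm (3/2) \<Omega> (\<lambda>x. \<bar>u x\<bar> * u x) = Lp_norm (3/2) \<Omega> (\<lambda>x. norm (u x) ^ 2)"
      by (rule Lp_norm_cong_norm) (simp add: abs_mult power2_eq_square)
    then show ?thesis using Lp_norm_norm_square[OF u] by simp
  qed
qed

lemma Lp_const:
  assumes "\<Omega> \<in> lmeasurable" and "p > 0"
  shows "Lp p \<Omega> (\<lambda>_. c)"
  using assms finite_measure.integrable_const[OF finite_measure_lebesgue_on]
  by (simp add: Lp_def)

lemma Lp_norm_of_vector:
  assumes "Lp p \<Omega> v"
  shows "Lp p \<Omega> (\<lambda>x. norm (v x))" and "Lp_norm p \<Omega> (\<lambda>x. norm (v x)) = Lp_norm p \<Omega> v"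
  using assms by (auto simp: Lp_def Lp_norm_def)

lemma bdry_pair_bound:
  assumes v: "Lp 3 \<Omega> v" and dv: "Lp 3 \<Omega> dv" and S: "Lp (3/2) \<Omega> Sext" and g: "Lp (3/2) \<Omega> gSext"
  shows "\<bar>bdry_pair \<Omega> Sext gSext v dv\<bar>
    \<le> Lp_norm 3 \<Omega> v * Lp_norm (3/2) \<Omega> gSext + Lp_norm 3 \<Omega> dv * Lp_norm (3/2) \<Omega> Sext"
proof -
  let ?L = "lebesgue_on \<Omega>"
  note nv = Lp_norm_of_vector(1)[OF v] and ng = Lp_norm_of_vector(1)[OF g]
  note H1 = integrable_mult_L3[OF nv ng] Holder_L3[OF nv ng]
  note H2 = integrable_mult_L3[OF dv S] Holder_L3[OF dv S]
  have [measurable]: "v \<in> borel_measurable ?L" "dv \<in> borel_measurable ?L" "Sext \<in> borel_measurable ?L"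
    "gSext \<in> borel_measurable ?L" using v dv S g by (auto simp: Lp_def)
  have "\<bar>bdry_pair \<Omega> Sext gSext v dv\<bar> \<le> (\<integral>x. norm (v x) * norm (gSext x) + \<bar>dv x * Sext x\<bar> \<partial>?L)"
    unfolding bdry_pair_def
  proof (rule integral_abs_bound_integral)
    show bound: "integrable ?L (\<lambda>x. norm (v x) * norm (gSext x) + \<bar>dv x * Sext x\<bar>)"
      using H1(1) H2(1) by auto
    have pointwise: "\<bar>v x \<bullet> gSext x + dv x * Sext x\<bar> \<le> norm (v x) * norm (gSext x) + \<bar>dv x * Sext x\<bar>" for x
      by (rule abs_triangle_ineq[THEN order_trans]) (simp add: Cauchy_Schwarz_ineq2)
    then show "\<bar>v x \<bullet> gSext x + dv x * Sext x\<bar> \<le> norm (v x) * norm (gSext x) + \<bar>dv x * Sext x\<bar>" for x .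
    show "integrable ?L (\<lambda>x. v x \<bullet> gSext x + dv x * Sext x)"
    proof (rule Bochner_Integration.integrable_bound[OF bound])
      show "AE x in ?L. norm (v x \<bullet> gSext x + dv x * Sext x)
          \<le> norm (norm (v x) * norm (gSext x) + \<bar>dv x * Sext x\<bar>)"
        using pointwise by (intro AE_I2) (simp add: order_trans[OF _ abs_ge_self])
    qed simp
  qed
  also have "\<dots> = (\<integral>x. norm (v x) * norm (gSext x) \<partial>?L) + (\<integral>x. \<bar>dv x * Sext x\<bar> \<partial>?L)"
    using H1(1) H2(1) by (intro Bochner_Integration.integral_add) auto
  also have "\<dots> \<le> Lp_norm 3 \<Omega> v * Lp_norm (3/2) \<Omega> gSext + Lp_norm 3 \<Omega> dv * Lp_norm (3/2) \<Omega> Sext"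
    using H1(2) H2(2) by (simp add: Lp_norm_of_vector(2)[OF v] Lp_norm_of_vector(2)[OF g])
  finally show ?thesis .
qed

lemma cube_le_mult_square_imp_le:
  fixes d c :: real
  assumes "0 \<le> d" "0 \<le> c" "d ^ 3 \<le> c * d ^ 2"
  shows "d \<le> c"
proof (cases "d = 0")
  case False
  then have "d * d ^ 2 \<le> c * d ^ 2" using assms(3) by (simp add: power3_eq_cube power2_eq_square)
  then show ?thesis using False assms(1) by simp
qed (use assms in simp)

lemma le_one_plus_power2: "(t::real) \<le> 1 + t ^ 2"
proof -
  have "0 \<le> (t - 1) ^ 2" by simp
  then have "2 * t \<le> t ^ 2 + 1" by (simp add: power2_diff)
  moreover have "0 \<le> t ^ 2" by simp
  ultimately show ?thesis by linarith
qed

locale regularized_solution =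
  fixes \<Omega> :: "(real^'n::finite) set" and R :: real
    and f Sext :: "real^'n \<Rightarrow> real" and gSext :: "real^'n \<Rightarrow> real^'n"
    and \<alpha> \<beta> :: "real^'n \<Rightarrow> real" and \<alpha>hi \<beta>lo \<beta>hi :: real
    and \<epsilon> :: real and m :: "real^'n \<Rightarrow> real^'n" and dm S :: "real^'n \<Rightarrow> real"
  assumes open_domain: "open \<Omega>" and radius_pos: "0 < R" and domain_in_ball: "\<Omega> \<subseteq> cball 0 R"
    and f: "Lp 3 \<Omega> f" and Sext: "Lp (3/2) \<Omega> Sext" and gSext: "Lp (3/2) \<Omega> gSext"
    and \<alpha>_measurable: "\<alpha> \<in> borel_measurable (lebesgue_on \<Omega>)"
    and \<alpha>_bounds: "AE x in lebesgue_on \<Omega>. 0 \<le> \<alpha> x \<and> \<alpha> x \<le> \<alpha>hi"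
    and \<beta>_measurable: "\<beta> \<in> borel_measurable (lebesgue_on \<Omega>)"
    and \<beta>_bounds: "AE x in lebesgue_on \<Omega>. \<beta>lo \<le> \<beta> x \<and> \<beta> x \<le> \<beta>hi"
    and \<alpha>hi_nonneg: "0 \<le> \<alpha>hi" and \<beta>lo_nonneg: "0 \<le> \<beta>lo" and \<beta>hi_nonneg: "0 \<le> \<beta>hi"
    and \<epsilon>_pos: "0 < \<epsilon>"
    and m: "Lp 3 \<Omega> m" and dm: "Lp 3 \<Omega> dm" and div_m: "weak_div \<Omega> m dm" and S: "Lp (3/2) \<Omega> S"
    and momentum_eq: "\<And>v dv. Lp 3 \<Omega> v \<Longrightarrow> Lp 3 \<Omega> dv \<Longrightarrow> weak_div \<Omega> v dv \<Longrightarrow>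
          (\<integral>x. (\<alpha> x + \<beta> x * norm (m x)) * (m x \<bullet> v x) \<partial>lebesgue_on \<Omega>)
          + \<epsilon> * (\<integral>x. \<bar>dm x\<bar> * dm x * dv x \<partial>lebesgue_on \<Omega>)
          - (\<integral>x. dv x * S x \<partial>lebesgue_on \<Omega>)
          = - bdry_pair \<Omega> Sext gSext v dv"
    and mass_eq: "\<And>q. Lp (3/2) \<Omega> q \<Longrightarrow>
          \<epsilon> * (\<integral>x. sgn_sqrt (S x) * q x \<partial>lebesgue_on \<Omega>) + (\<integral>x. dm x * q x \<partial>lebesgue_on \<Omega>)
          = (\<integral>x. f x * q x \<partial>lebesgue_on \<Omega>)"
begin

lemma domain_lmeasurable: "\<Omega> \<in> lmeasurable"
  using open_domain domain_in_ball by (intro lmeasurable_open bounded_subset[OF bounded_cball])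

lemma measurable_data[measurable]:
  "f \<in> borel_measurable (lebesgue_on \<Omega>)" "m \<in> borel_measurable (lebesgue_on \<Omega>)"
  "dm \<in> borel_measurable (lebesgue_on \<Omega>)" "S \<in> borel_measurable (lebesgue_on \<Omega>)"
  "\<alpha> \<in> borel_measurable (lebesgue_on \<Omega>)" "\<beta> \<in> borel_measurable (lebesgue_on \<Omega>)"
  using f m dm S \<alpha>_measurable \<beta>_measurable by (auto simp: Lp_def)

lemma Lp_sgn_sqrt_S: "Lp 3 \<Omega> (\<lambda>x. sgn_sqrt (S x))"
  by (rule Lp_sgn_sqrt[OF S])

lemma integral_sgn_sqrt_S_mult_S:
  "(\<integral>x. sgn_sqrt (S x) * S x \<partial>lebesgue_on \<Omega>) = Lp_norm 3 \<Omega> (\<lambda>x. sgn_sqrt (S x)) ^ 3"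
  by (simp add: Lp_norm_cube sgn_sqrt_mult_self)

lemma integral_cube_dm: "(\<integral>x. \<bar>dm x\<bar> * dm x * dm x \<partial>lebesgue_on \<Omega>) = Lp_norm 3 \<Omega> dm ^ 3"
proof -
  have "\<bar>dm x\<bar> * dm x * dm x = norm (dm x) powr 3" for x
    by (simp add: power3_eq_cube abs_mult_self_eq)
  then show ?thesis by (simp add: Lp_norm_cube)
qed

lemma div_estimate:
  "Lp_norm 3 \<Omega> dm \<le> Lp_norm 3 \<Omega> f + \<epsilon> * Lp_norm 3 \<Omega> (\<lambda>x. sgn_sqrt (S x))"
proof -
  let ?L = "lebesgue_on \<Omega>" and ?q = "\<lambda>x. \<bar>dm x\<bar> * dm x"
  note q = Lp_abs_mult_self[OF dm] Lp_norm_abs_mult_self[OF dm]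
  have "Lp_norm 3 \<Omega> dm ^ 3 = (\<integral>x. dm x * ?q x \<partial>?L)"
    using integral_cube_dm by (simp add: mult.commute)
  also have "\<dots> = (\<integral>x. f x * ?q x \<partial>?L) - \<epsilon> * (\<integral>x. sgn_sqrt (S x) * ?q x \<partial>?L)"
    using mass_eq[OF q(1)] by simp
  also have "\<dots> \<le> Lp_norm 3 \<Omega> f * Lp_norm 3 \<Omega> dm ^ 2
      + \<epsilon> * (Lp_norm 3 \<Omega> (\<lambda>x. sgn_sqrt (S x)) * Lp_norm 3 \<Omega> dm ^ 2)"
  proof -
    have "- (\<integral>x. sgn_sqrt (S x) * ?q x \<partial>?L) \<le> Lp_norm 3 \<Omega> (\<lambda>x. sgn_sqrt (S x)) * Lp_norm 3 \<Omega> dm ^ 2"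
      using Holder_L3_abs[OF Lp_sgn_sqrt_S q(1)] unfolding q(2) by linarith
    then have "\<epsilon> * - (\<integral>x. sgn_sqrt (S x) * ?q x \<partial>?L)
        \<le> \<epsilon> * (Lp_norm 3 \<Omega> (\<lambda>x. sgn_sqrt (S x)) * Lp_norm 3 \<Omega> dm ^ 2)"
      using \<epsilon>_pos by (intro mult_left_mono) auto
    then show ?thesis
      using Holder_L3_abs[OF f q(1)] unfolding q(2) by linarith
  qed
  also have "\<dots> = (Lp_norm 3 \<Omega> f + \<epsilon> * Lp_norm 3 \<Omega> (\<lambda>x. sgn_sqrt (S x))) * Lp_norm 3 \<Omega> dm ^ 2"
    by (simp add: algebra_simps)
  finally show ?thesis
    by (rule cube_le_mult_square_imp_le[OF Lp_norm_nonneg, rotated])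
      (use \<epsilon>_pos Lp_norm_nonneg[of 3 \<Omega> f] Lp_norm_nonneg[of 3 \<Omega> "\<lambda>x. sgn_sqrt (S x)"] in simp)
qed

lemma drag_bounds:
  "AE x in lebesgue_on \<Omega>. 0 \<le> \<alpha> x + \<beta> x * norm (m x) \<and> \<alpha> x + \<beta> x * norm (m x) \<le> \<alpha>hi + \<beta>hi * norm (m x)
     \<and> \<beta>lo * norm (m x) \<le> \<alpha> x + \<beta> x * norm (m x)"
  using \<alpha>_bounds \<beta>_bounds
proof eventually_elim
  case (elim x)
  have "\<beta>lo * norm (m x) \<le> \<beta> x * norm (m x)" "\<beta> x * norm (m x) \<le> \<beta>hi * norm (m x)"
    using elim by (auto intro: mult_right_mono)
  moreover have "0 \<le> \<beta>lo * norm (m x)" using \<beta>lo_nonneg by simp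
  ultimately show ?case using elim by linarith
qed

lemma drag_energy_lower_bound:
  "\<beta>lo * Lp_norm 3 \<Omega> m ^ 3 \<le> (\<integral>x. (\<alpha> x + \<beta> x * norm (m x)) * (m x \<bullet> m x) \<partial>lebesgue_on \<Omega>)"
proof -
  let ?L = "lebesgue_on \<Omega>" and ?h = "\<lambda>x. (\<alpha> x + \<beta> x * norm (m x)) * (m x \<bullet> m x)"
  have h_eq: "?h x = (\<alpha> x + \<beta> x * norm (m x)) * norm (m x) ^ 2" for x
    by (simp add: power2_norm_eq_inner)
  have h_bounds: "AE x in ?L. \<beta>lo * norm (m x) ^ 3 \<le> ?h x
      \<and> ?h x \<le> \<alpha>hi * norm (m x) ^ 2 + \<beta>hi * norm (m x) ^ 3"
    using drag_bounds
  proof eventually_elim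
    case (elim x)
    then have "\<beta>lo * norm (m x) * norm (m x) ^ 2 \<le> ?h x"
      and "?h x \<le> (\<alpha>hi + \<beta>hi * norm (m x)) * norm (m x) ^ 2"
      unfolding h_eq by (auto intro: mult_right_mono)
    then show ?case by (simp add: algebra_simps power2_eq_square power3_eq_cube)
  qed
  have one: "Lp 3 \<Omega> (\<lambda>_. 1::real)" by (rule Lp_const[OF domain_lmeasurable]) simp
  have m2: "integrable ?L (\<lambda>x. norm (m x) ^ 2)"
    using integrable_mult_L3[OF one Lp_norm_square_Lp[OF m]] by simp
  have m3: "integrable ?L (\<lambda>x. norm (m x) ^ 3)"
    using m by (simp add: Lp_def)
  have h_int: "integrable ?L ?h"
  proof (rule Bochner_Integration.integrable_bound)
    show "integrable ?L (\<lambda>x. \<alpha>hi * norm (m x) ^ 2 + \<beta>hi * norm (m x) ^ 3)"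
      using m2 m3 by simp
    show "AE x in ?L. norm (?h x) \<le> norm (\<alpha>hi * norm (m x) ^ 2 + \<beta>hi * norm (m x) ^ 3)"
      using h_bounds
    proof eventually_elim
      case (elim x)
      have "0 \<le> \<beta>lo * norm (m x) ^ 3" using \<beta>lo_nonneg by simp
      then show ?case using elim by auto
    qed
  qed simp
  have "\<beta>lo * Lp_norm 3 \<Omega> m ^ 3 = (\<integral>x. \<beta>lo * norm (m x) ^ 3 \<partial>?L)"
    by (simp add: Lp_norm_cube)
  also have "\<dots> \<le> (\<integral>x. ?h x \<partial>?L)"
    using h_bounds m3 h_int by (intro integral_mono_AE) (auto elim: eventually_mono)
  finally show ?thesis .
qed

lemma energy_estimate:
  "\<beta>lo * Lp_norm 3 \<Omega> m ^ 3
    \<le> Lp_norm 3 \<Omega> f * Lp_norm 3 \<Omega> (\<lambda>x. sgn_sqrt (S x)) ^ 2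
      + Lp_norm 3 \<Omega> m * Lp_norm (3/2) \<Omega> gSext + Lp_norm 3 \<Omega> dm * Lp_norm (3/2) \<Omega> Sext"
proof -
  let ?L = "lebesgue_on \<Omega>"
  have "\<beta>lo * Lp_norm 3 \<Omega> m ^ 3
      \<le> (\<integral>x. f x * S x \<partial>?L) - \<epsilon> * Lp_norm 3 \<Omega> (\<lambda>x. sgn_sqrt (S x)) ^ 3
        - \<epsilon> * Lp_norm 3 \<Omega> dm ^ 3 - bdry_pair \<Omega> Sext gSext m dm"
    using drag_energy_lower_bound momentum_eq[OF m dm div_m] mass_eq[OF S]
    unfolding integral_cube_dm integral_sgn_sqrt_S_mult_S by linarith
  also have "\<dots> \<le> \<bar>\<integral>x. f x * S x \<partial>?L\<bar> + \<bar>bdry_pair \<Omega> Sext gSext m dm\<bar>"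
  proof -
    have "0 \<le> \<epsilon> * Lp_norm 3 \<Omega> (\<lambda>x. sgn_sqrt (S x)) ^ 3" "0 \<le> \<epsilon> * Lp_norm 3 \<Omega> dm ^ 3"
      using \<epsilon>_pos Lp_norm_nonneg by (simp_all add: Lp_norm_def)
    then show ?thesis by linarith
  qed
  also have "\<dots> \<le> Lp_norm 3 \<Omega> f * Lp_norm 3 \<Omega> (\<lambda>x. sgn_sqrt (S x)) ^ 2
      + (Lp_norm 3 \<Omega> m * Lp_norm (3/2) \<Omega> gSext + Lp_norm 3 \<Omega> dm * Lp_norm (3/2) \<Omega> Sext)"
    using Holder_L3_abs[OF f S] bdry_pair_bound[OF m dm Sext gSext] by (simp add: Lp_norm_sgn_sqrt)
  finally show ?thesis by simp
qed

lemma momentum_term_bound: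
  assumes v: "Lp 3 \<Omega> v"
  shows "\<bar>\<integral>x. (\<alpha> x + \<beta> x * norm (m x)) * (m x \<bullet> v x) \<partial>lebesgue_on \<Omega>\<bar>
    \<le> Lp_norm 3 \<Omega> v * (\<alpha>hi * Lp_norm (3/2) \<Omega> (\<lambda>_. 1::real) + (\<alpha>hi + \<beta>hi) * Lp_norm 3 \<Omega> m ^ 2)"
proof -
  let ?L = "lebesgue_on \<Omega>" and ?h = "\<lambda>x. (\<alpha> x + \<beta> x * norm (m x)) * (m x \<bullet> v x)"
    and ?b = "\<lambda>x. \<alpha>hi * (norm (v x) * 1) + (\<alpha>hi + \<beta>hi) * (norm (v x) * norm (m x) ^ 2)"
  have [measurable]: "v \<in> borel_measurable ?L" using v by (simp add: Lp_def)
  note nv = Lp_norm_of_vector[OF v]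
  have one: "Lp (3/2) \<Omega> (\<lambda>_. 1::real)" by (rule Lp_const[OF domain_lmeasurable]) simp
  note m2 = Lp_norm_square_Lp[OF m] Lp_norm_norm_square[OF m]
  have bounded: "AE x in ?L. \<bar>?h x\<bar> \<le> ?b x"
    using drag_bounds
  proof eventually_elim
    case (elim x)
    have "\<bar>?h x\<bar> \<le> (\<alpha>hi + \<beta>hi * norm (m x)) * (norm (m x) * norm (v x))"
      using elim by (auto simp: abs_mult intro!: mult_mono Cauchy_Schwarz_ineq2)
    also have "\<dots> = \<alpha>hi * (norm (m x) * norm (v x)) + \<beta>hi * (norm (v x) * norm (m x) ^ 2)"
      by (simp add: algebra_simps power2_eq_square)
    also have "\<dots> \<le> \<alpha>hi * ((1 + norm (m x) ^ 2) * norm (v x)) + \<beta>hi * (norm (v x) * norm (m x) ^ 2)"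
      using \<alpha>hi_nonneg le_one_plus_power2[of "norm (m x)"]
      by (intro add_mono mult_left_mono mult_right_mono) auto
    finally show ?case by (simp add: algebra_simps)
  qed
  have b_int: "integrable ?L ?b"
    using integrable_mult_L3[OF nv(1) one] integrable_mult_L3[OF nv(1) m2(1)] by simp
  have h_int: "integrable ?L ?h"
  proof (rule Bochner_Integration.integrable_bound[OF b_int])
    show "AE x in ?L. norm (?h x) \<le> norm (?b x)"
      using bounded by eventually_elim auto
  qed measurable
  have "\<bar>\<integral>x. ?h x \<partial>?L\<bar> \<le> (\<integral>x. \<bar>?h x\<bar> \<partial>?L)"
    by (rule integral_abs_bound)
  also have "\<dots> \<le> (\<integral>x. ?b x \<partial>?L)"
    by (rule integral_mono_AE[OF integrable_abs[OF h_int] b_int bounded])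
  also have "\<dots> = \<alpha>hi * (\<integral>x. \<bar>norm (v x) * 1\<bar> \<partial>?L)
      + (\<alpha>hi + \<beta>hi) * (\<integral>x. \<bar>norm (v x) * norm (m x) ^ 2\<bar> \<partial>?L)"
    using integrable_mult_L3[OF nv(1) one] integrable_mult_L3[OF nv(1) m2(1)] by simp
  also have "\<dots> \<le> \<alpha>hi * (Lp_norm 3 \<Omega> v * Lp_norm (3/2) \<Omega> (\<lambda>_. 1::real))
      + (\<alpha>hi + \<beta>hi) * (Lp_norm 3 \<Omega> v * Lp_norm 3 \<Omega> m ^ 2)"
    using Holder_L3[OF nv(1) one] Holder_L3[OF nv(1) m2(1)] \<alpha>hi_nonneg \<beta>hi_nonneg
    unfolding nv(2) m2(2) by (intro add_mono mult_left_mono) auto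
  finally show ?thesis by (simp add: algebra_simps)
qed

lemma pressure_estimate:
  "Lp_norm 3 \<Omega> (\<lambda>x. sgn_sqrt (S x)) ^ 3
    \<le> Lp_norm 3 \<Omega> (\<lambda>x. sgn_sqrt (S x))
      * (2 * R * (\<alpha>hi * Lp_norm (3/2) \<Omega> (\<lambda>_. 1::real) + Lp_norm (3/2) \<Omega> gSext) + Lp_norm (3/2) \<Omega> Sext
         + 2 * R * (\<alpha>hi + \<beta>hi) * Lp_norm 3 \<Omega> m ^ 2 + \<epsilon> * Lp_norm 3 \<Omega> dm ^ 2)"
proof -
  let ?L = "lebesgue_on \<Omega>" and ?s = "\<lambda>x. sgn_sqrt (S x)"
  define i where "i = Lp_norm 3 \<Omega> ?s"
  define K where "K = \<alpha>hi * Lp_norm (3/2) \<Omega> (\<lambda>_. 1::real) + (\<alpha>hi + \<beta>hi) * Lp_norm 3 \<Omega> m ^ 2"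
  obtain v dv where v: "Lp 3 \<Omega> v" and dv: "Lp 3 \<Omega> dv" and div_v: "weak_div \<Omega> v dv"
    and dv_eq: "AE x in ?L. dv x = ?s x" and v_norm: "Lp_norm 3 \<Omega> v \<le> 2 * R * i"
    using div_right_inverse[OF open_domain radius_pos domain_in_ball Lp_sgn_sqrt_S, folded i_def] .
  have [measurable]: "dv \<in> borel_measurable ?L" using dv by (simp add: Lp_def)
  have dv_norm: "Lp_norm 3 \<Omega> dv = i"
    unfolding i_def using dv_eq by (intro Lp_norm_cong_AE) auto
  note q = Lp_abs_mult_self[OF dm] Lp_norm_abs_mult_self[OF dm]
  have "i ^ 3 = (\<integral>x. dv x * S x \<partial>?L)"
    unfolding i_def integral_sgn_sqrt_S_mult_S[symmetric]
    using dv_eq by (intro integral_cong_AE) (auto elim: eventually_mono)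
  also have "\<dots> = (\<integral>x. (\<alpha> x + \<beta> x * norm (m x)) * (m x \<bullet> v x) \<partial>?L)
      + \<epsilon> * (\<integral>x. dv x * (\<bar>dm x\<bar> * dm x) \<partial>?L) + bdry_pair \<Omega> Sext gSext v dv"
    using momentum_eq[OF v dv div_v] by (simp add: algebra_simps)
  also have "\<dots> \<le> Lp_norm 3 \<Omega> v * K + \<epsilon> * (i * Lp_norm 3 \<Omega> dm ^ 2)
      + (Lp_norm 3 \<Omega> v * Lp_norm (3/2) \<Omega> gSext + i * Lp_norm (3/2) \<Omega> Sext)"
  proof -
    have "\<epsilon> * (\<integral>x. dv x * (\<bar>dm x\<bar> * dm x) \<partial>?L) \<le> \<epsilon> * (i * Lp_norm 3 \<Omega> dm ^ 2)"
      using Holder_L3_abs[OF dv q(1)] \<epsilon>_pos unfolding q(2) dv_norm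
      by (intro mult_left_mono) auto
    then show ?thesis
      using momentum_term_bound[OF v] bdry_pair_bound[OF v dv Sext gSext]
      unfolding K_def dv_norm by linarith
  qed
  also have "\<dots> = Lp_norm 3 \<Omega> v * (K + Lp_norm (3/2) \<Omega> gSext)
      + i * (Lp_norm (3/2) \<Omega> Sext + \<epsilon> * Lp_norm 3 \<Omega> dm ^ 2)"
    by (simp add: algebra_simps)
  also have "\<dots> \<le> 2 * R * i * (K + Lp_norm (3/2) \<Omega> gSext)
      + i * (Lp_norm (3/2) \<Omega> Sext + \<epsilon> * Lp_norm 3 \<Omega> dm ^ 2)"
  proof -
    have "0 \<le> K + Lp_norm (3/2) \<Omega> gSext"
      unfolding K_def using \<alpha>hi_nonneg \<beta>hi_nonneg
      by (intro add_nonneg_nonneg mult_nonneg_nonneg Lp_norm_nonneg zero_le_power2) auto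
    then show ?thesis by (intro add_right_mono mult_right_mono v_norm)
  qed
  also have "\<dots> = i * (2 * R * (\<alpha>hi * Lp_norm (3/2) \<Omega> (\<lambda>_. 1::real) + Lp_norm (3/2) \<Omega> gSext)
      + Lp_norm (3/2) \<Omega> Sext + 2 * R * (\<alpha>hi + \<beta>hi) * Lp_norm 3 \<Omega> m ^ 2 + \<epsilon> * Lp_norm 3 \<Omega> dm ^ 2)"
    by (simp add: K_def algebra_simps)
  finally show ?thesis unfolding i_def .
qed

end

lemma le_of_cubic_le:
  fixes a b c0 c1 c2 :: real
  assumes "0 < b" "0 \<le> c0" "0 \<le> c1" "0 \<le> c2" and cubic: "b * a ^ 3 \<le> c0 + c1 * a + c2 * a ^ 2"
  shows "a \<le> max 1 ((c0 + c1 + c2) / b)"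
proof (cases "a \<le> 1")
  case False
  then have "1 \<le> a ^ 2" and "a * 1 \<le> a * a"
    by (simp_all add: one_le_power mult_left_mono)
  then have "c0 * 1 + c1 * a \<le> c0 * a ^ 2 + c1 * a ^ 2"
    unfolding power2_eq_square[of a]
    using assms by (intro add_mono mult_left_mono) auto
  then have "c0 + c1 * a + c2 * a ^ 2 \<le> (c0 + c1 + c2) * a ^ 2"
    by (simp add: algebra_simps)
  with cubic have "(b * a) * a ^ 2 \<le> (c0 + c1 + c2) * a ^ 2"
    by (simp add: power3_eq_cube power2_eq_square algebra_simps)
  then have "b * a \<le> c0 + c1 + c2" using False by simp
  then have "a \<le> (c0 + c1 + c2) / b" using assms(1) by (simp add: field_simps)
  then show ?thesis by simp
qed simp

lemma pressure_square_le:
  fixes a d i F C1 C2 \<epsilon> :: real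
  assumes "0 \<le> i" "0 \<le> d" "0 \<le> F" "0 \<le> C1" "0 \<le> C2" "0 < \<epsilon>" "\<epsilon> \<le> 1/2"
    and div: "d \<le> F + \<epsilon> * i" and pressure: "i ^ 3 \<le> i * (C1 + C2 * a ^ 2 + \<epsilon> * d ^ 2)"
  shows "i ^ 2 \<le> 2 * C1 + 4 * F ^ 2 + 2 * C2 * a ^ 2"
proof (cases "i = 0")
  case False
  with pressure \<open>0 \<le> i\<close> have "i ^ 2 \<le> C1 + C2 * a ^ 2 + \<epsilon> * d ^ 2"
    by (simp add: power3_eq_cube power2_eq_square)
  moreover have "\<epsilon> * d ^ 2 \<le> F ^ 2 + i ^ 2 / 4"
  proof -
    have "d ^ 2 \<le> (F + \<epsilon> * i) ^ 2" using div assms by (intro power_mono) auto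
    also have "\<dots> \<le> 2 * F ^ 2 + 2 * (\<epsilon> * i) ^ 2"
      using zero_le_power2[of "F - \<epsilon> * i"] unfolding power2_sum power2_diff by linarith
    finally have "\<epsilon> * d ^ 2 \<le> \<epsilon> * (2 * F ^ 2 + 2 * (\<epsilon> * i) ^ 2)"
      using assms by (intro mult_left_mono) auto
    then have "\<epsilon> * d ^ 2 \<le> \<epsilon> * (2 * F ^ 2) + 2 * \<epsilon> ^ 3 * i ^ 2"
      by (simp add: algebra_simps power3_eq_cube power2_eq_square)
    also have "\<dots> \<le> F ^ 2 + i ^ 2 / 4"
    proof -
      have "\<epsilon> ^ 3 \<le> (1/2) ^ 3" using assms by (intro power_mono) auto
      then have "\<epsilon> ^ 3 * i ^ 2 \<le> (1/2) ^ 3 * i ^ 2" by (intro mult_right_mono) auto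
      then have "2 * \<epsilon> ^ 3 * i ^ 2 \<le> i ^ 2 / 4" by (simp add: power3_eq_cube)
      moreover have "(2 * \<epsilon>) * F ^ 2 \<le> 1 * F ^ 2" using assms by (intro mult_right_mono) auto
      ultimately show ?thesis by linarith
    qed
    finally show ?thesis .
  qed
  moreover have "0 \<le> C2 * a ^ 2" "0 \<le> F ^ 2" using assms by simp_all
  ultimately show ?thesis using \<open>0 \<le> C1\<close> by linarith
qed (use assms in simp)

lemma estimates_imp_bounds:
  fixes a d i \<epsilon> F G \<Sigma> C1 C2 \<beta>lo :: real
  assumes nonneg: "0 \<le> a" "0 \<le> d" "0 \<le> i" "0 \<le> F" "0 \<le> G" "0 \<le> \<Sigma>" "0 \<le> C1" "0 \<le> C2"
    and \<beta>lo: "0 < \<beta>lo" and \<epsilon>: "0 < \<epsilon>" "\<epsilon> \<le> 1/2"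
    and div: "d \<le> F + \<epsilon> * i"
    and energy: "\<beta>lo * a ^ 3 \<le> F * i ^ 2 + a * G + d * \<Sigma>"
    and pressure: "i ^ 3 \<le> i * (C1 + C2 * a ^ 2 + \<epsilon> * d ^ 2)"
  defines "P \<equiv> \<lambda>t. 2 * C1 + 4 * F ^ 2 + 2 * C2 * t ^ 2"
    and "A \<equiv> max 1 (((F + \<Sigma>) * (2 * C1 + 4 * F ^ 2) + \<Sigma> * (F + 1) + G + (F + \<Sigma>) * (2 * C2)) / \<beta>lo)"
  shows "a \<le> A" and "i ^ 2 \<le> P A" and "d \<le> F + 1 + P A"
proof -
  have i2: "i ^ 2 \<le> P a"
    unfolding P_def using pressure_square_le[OF nonneg(3,2,4,7,8) \<epsilon> div pressure] .
  have "\<epsilon> * i \<le> 1 + i ^ 2"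
    using mult_right_mono[of \<epsilon> 1 i] \<epsilon> nonneg(3) le_one_plus_power2[of i] by linarith
  then have d: "d \<le> F + 1 + P a" using div i2 by linarith
  have "\<beta>lo * a ^ 3 \<le> F * P a + a * G + \<Sigma> * (F + 1 + P a)"
    using energy mult_left_mono[OF i2 nonneg(4)] mult_left_mono[OF d nonneg(6)] by (simp add: algebra_simps)
  also have "\<dots> = ((F + \<Sigma>) * (2 * C1 + 4 * F ^ 2) + \<Sigma> * (F + 1)) + G * a + ((F + \<Sigma>) * (2 * C2)) * a ^ 2"
    by (simp add: P_def algebra_simps)
  finally show "a \<le> A"
    unfolding A_def using nonneg by (intro le_of_cubic_le \<beta>lo) auto
  moreover have mono: "P a \<le> P A"
    using \<open>a \<le> A\<close> nonneg unfolding P_def by (simp add: mult_left_mono power_mono)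
  ultimately show "i ^ 2 \<le> P A" and "d \<le> F + 1 + P A" using i2 d by linarith+
qed

lemma V_norm_le:
  assumes "Lp_norm 3 \<Omega> v \<le> A" and "Lp_norm 3 \<Omega> dv \<le> B"
  shows "V_norm \<Omega> v dv \<le> (A ^ 3 + B ^ 3) powr (1/3)"
proof -
  have "V_norm \<Omega> v dv = (Lp_norm 3 \<Omega> v ^ 3 + Lp_norm 3 \<Omega> dv ^ 3) powr (1/3)"
    by (simp add: V_norm_def Lp_norm_cube)
  also have "\<dots> \<le> (A ^ 3 + B ^ 3) powr (1/3)"
    using assms Lp_norm_nonneg[of 3 \<Omega> v] Lp_norm_nonneg[of 3 \<Omega> dv]
    by (intro powr_mono2 add_mono power_mono add_nonneg_nonneg zero_le_power) auto
  finally show ?thesis .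
qed

theorem proposition1p7:
  fixes \<Omega> :: "(real^'n) set"
    and f :: "real^'n \<Rightarrow> real"
    and Sext :: "real^'n \<Rightarrow> real" and gSext :: "real^'n \<Rightarrow> real^'n"
    and \<alpha> \<beta> :: "real^'n \<Rightarrow> real"
    and \<alpha>lo \<alpha>hi \<beta>lo \<beta>hi :: real
    and m :: "real \<Rightarrow> real^'n \<Rightarrow> real^'n"
    and dm :: "real \<Rightarrow> real^'n \<Rightarrow> real"
    and S :: "real \<Rightarrow> real^'n \<Rightarrow> real"
  assumes dom: "open \<Omega>" "connected \<Omega>" "bounded \<Omega>" "\<Omega> \<noteq> {}"
    and reg: "unif_C1 \<Omega>"
    and f: "Lp 3 \<Omega> f"
    and Sb: "Lp (3/2) \<Omega> Sext" "Lp (3/2) \<Omega> gSext" "weak_grad \<Omega> Sext gSext"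
    and \<alpha>: "\<alpha> \<in> borel_measurable (lebesgue_on \<Omega>)" "0 < \<alpha>lo" "\<alpha>lo \<le> \<alpha>hi"
           "AE x in lebesgue_on \<Omega>. \<alpha>lo \<le> \<alpha> x \<and> \<alpha> x \<le> \<alpha>hi"
    and \<beta>: "\<beta> \<in> borel_measurable (lebesgue_on \<Omega>)" "0 < \<beta>lo" "\<beta>lo \<le> \<beta>hi"
           "AE x in lebesgue_on \<Omega>. \<beta>lo \<le> \<beta> x \<and> \<beta> x \<le> \<beta>hi"
    and sol: "\<And>\<epsilon>. 0 < \<epsilon> \<Longrightarrow>
       Lp 3 \<Omega> (m \<epsilon>) \<and> Lp 3 \<Omega> (dm \<epsilon>) \<and> weak_div \<Omega> (m \<epsilon>) (dm \<epsilon>) \<and> Lp (3/2) \<Omega> (S \<epsilon>) \<and>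
       (\<forall>v dv. Lp 3 \<Omega> v \<and> Lp 3 \<Omega> dv \<and> weak_div \<Omega> v dv \<longrightarrow>
          integral\<^sup>L (lebesgue_on \<Omega>) (\<lambda>x. (\<alpha> x + \<beta> x * norm (m \<epsilon> x)) * (m \<epsilon> x \<bullet> v x))
          + \<epsilon> * integral\<^sup>L (lebesgue_on \<Omega>) (\<lambda>x. \<bar>dm \<epsilon> x\<bar> * dm \<epsilon> x * dv x)
          - integral\<^sup>L (lebesgue_on \<Omega>) (\<lambda>x. dv x * S \<epsilon> x)
          = - bdry_pair \<Omega> Sext gSext v dv) \<and>
       (\<forall>q. Lp (3/2) \<Omega> q \<longrightarrow>
          \<epsilon> * integral\<^sup>L (lebesgue_on \<Omega>) (\<lambda>x. sgn_sqrt (S \<epsilon> x) * q x)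
          + integral\<^sup>L (lebesgue_on \<Omega>) (\<lambda>x. dm \<epsilon> x * q x)
          = integral\<^sup>L (lebesgue_on \<Omega>) (\<lambda>x. f x * q x))"
  shows "\<exists>Km KS \<epsilon>0. 0 < \<epsilon>0 \<and> (\<forall>\<epsilon>. 0 < \<epsilon> \<and> \<epsilon> < \<epsilon>0 \<longrightarrow>
           V_norm \<Omega> (m \<epsilon>) (dm \<epsilon>) \<le> Km \<and> Lp_norm (3/2) \<Omega> (S \<epsilon>) \<le> KS)"
proof -
  obtain R where R: "0 < R" "\<Omega> \<subseteq> cball 0 R"
    using bounded_pos[of \<Omega>] dom(3) by (metis mem_cball_0 subsetI)
  have \<alpha>_bounds: "AE x in lebesgue_on \<Omega>. 0 \<le> \<alpha> x \<and> \<alpha> x \<le> \<alpha>hi"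
    using \<alpha>(4) by eventually_elim (use \<alpha>(2) in auto)
  have solution: "regularized_solution \<Omega> R f Sext gSext \<alpha> \<beta> \<alpha>hi \<beta>lo \<beta>hi \<epsilon> (m \<epsilon>) (dm \<epsilon>) (S \<epsilon>)"
    if "0 < \<epsilon>" for \<epsilon>
    using sol[OF that] dom(1) R f Sb \<alpha>(1,2,3) \<alpha>_bounds \<beta> that by unfold_locales auto
  define F where "F = Lp_norm 3 \<Omega> f"
  define G where "G = Lp_norm (3/2) \<Omega> gSext"
  define \<Sigma> where "\<Sigma> = Lp_norm (3/2) \<Omega> Sext"
  define C1 where "C1 = 2 * R * (\<alpha>hi * Lp_norm (3/2) \<Omega> (\<lambda>_. 1::real) + G) + \<Sigma>"
  define C2 where "C2 = 2 * R * (\<alpha>hi + \<beta>hi)"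
  define A where "A = max 1 (((F + \<Sigma>) * (2 * C1 + 4 * F ^ 2) + \<Sigma> * (F + 1) + G + (F + \<Sigma>) * (2 * C2)) / \<beta>lo)"
  define KS where "KS = 2 * C1 + 4 * F ^ 2 + 2 * C2 * A ^ 2"
  have data_nonneg: "0 \<le> F" "0 \<le> G" "0 \<le> \<Sigma>" "0 \<le> C1" "0 \<le> C2"
    using R \<alpha>(2,3) \<beta>(2,3) unfolding F_def G_def \<Sigma>_def C1_def C2_def by (auto simp: Lp_norm_def)
  define Km where "Km = (A ^ 3 + (F + 1 + KS) ^ 3) powr (1/3)"
  have "V_norm \<Omega> (m \<epsilon>) (dm \<epsilon>) \<le> Km \<and> Lp_norm (3/2) \<Omega> (S \<epsilon>) \<le> KS"
    if \<epsilon>: "0 < \<epsilon>" "\<epsilon> < 1/2" for \<epsilon>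
  proof -
    interpret regularized_solution \<Omega> R f Sext gSext \<alpha> \<beta> \<alpha>hi \<beta>lo \<beta>hi \<epsilon> "m \<epsilon>" "dm \<epsilon>" "S \<epsilon>"
      by (rule solution[OF \<epsilon>(1)])
    note estimates = div_estimate energy_estimate pressure_estimate
    note bounds = estimates_imp_bounds[OF Lp_norm_nonneg Lp_norm_nonneg Lp_norm_nonneg data_nonneg \<beta>(2) _ _
        estimates[folded F_def G_def \<Sigma>_def, folded C1_def C2_def], folded A_def, folded KS_def]
    show ?thesis
      using bounds \<epsilon> unfolding Km_def by (auto intro: V_norm_le simp: Lp_norm_sgn_sqrt)
  qed
  then show ?thesis
    by (intro exI[of _ Km] exI[of _ KS] exI[of _ "1/2"]) auto
qed

end
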